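(* For every $\tau>0$, $$\int_{\mathbb R^3\setminus\overline D}(fv_g-w_fg)\,dx=J(\tau;f,g)+\int_{\mathbb R^3\setminus\overline D}(\nabla\epsilon^0_f\cdot\nabla\epsilon^0_g+\tau^2\epsilon^0_f\epsilon^0_g)\,dx-e^{-\tau T}\int_{\mathbb R^3\setminus\overline D}(\nabla Z_f\cdot\nabla v_g+\tau^2Z_fv_g)\,dx.$$
   Context: Let $D\subset\mathbb R^3$ be a nonempty bounded open set with $C^2$ boundary such that $\mathbb R^3\setminus\overline D$ is connected. Fix $T\in(0,\infty)$. $B,B'$ are open balls with $\overline B\cap\overline D=\overline{B'}\cap\overline D=\emptyset$, $f=\chi_B$, $g=\chi_{B'}$. $u_f$ is the weak solution of $\partial_t^2u-\Delta u=0$ in $(\mathbb R^3\setminus\overline D)\times(0,T)$, $u(\cdot,0)=0$, $\partial_tu(\cdot,0)=f$, $u=0$ on $\partial D\times(0,T)$; $w_f(x,\tau)=\int_0^Te^{-\tau t}u_f(x,t)dt$. For $h\in L^2(\mathbb R^3)$, $v_h\in H^1(\mathbb R^3)$ is the weak solution of $(\Delta-\tau^2)v+h=0$ in $\mathbb R^3$. $\epsilon^0_h\in H^1(\mathbb R^3\setminus\overline D)$ ($h=f,g$) is the weak solution of $(\Delta-\tau^2)\epsilon=0$ in $\mathbb R^3\setminus\overline D$, $\epsilon=-v_h$ on $\partial D$. $F_f(x,\tau)=\partial_tu_f(x,T)+\tau u_f(x,T)$ and $Z_f\in H^1(\mathbb R^3\setminus\overline D)$ solves $(\Delta-\tau^2)Z_f=F_f$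 in $\mathbb R^3\setminus\overline D$, $Z_f=0$ on $\partial D$. $J(\tau;f,g)=\int_D(\nabla v_f\cdot\nabla v_g+\tau^2v_fv_g)\,dx$. *)

theory Defs
  imports "HOL-Analysis.Analysis"
begin

definition partial :: "'n::finite \<Rightarrow> (real^'n \<Rightarrow> real) \<Rightarrow> real^'n \<Rightarrow> real" where
  "partial i f x = frechet_derivative f (at x) (axis i 1)"

definition grad :: "(real^'n::finite \<Rightarrow> real) \<Rightarrow> real^'n \<Rightarrow> real^'n" where
  "grad f x = (\<chi> i. partial i f x)"

fun Ck :: "nat \<Rightarrow> (real^'n::finite \<Rightarrow> real) \<Rightarrow> bool" where
  "Ck 0 f = continuous_on UNIV f"
| "Ck (Suc k) f = (f differentiable_on UNIV \<and> continuous_on UNIV f \<and> (\<forall>i. Ck k (partial i f)))"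

definition smooth_fun :: "(real^'n::finite \<Rightarrow> real) \<Rightarrow> bool" where
  "smooth_fun f = (\<forall>k. Ck k f)"

definition test_fun :: "(real^'n::finite) set \<Rightarrow> (real^'n \<Rightarrow> real) \<Rightarrow> bool" where
  "test_fun U \<phi> = (smooth_fun \<phi> \<and> compact (closure {x. \<phi> x \<noteq> 0}) \<and> closure {x. \<phi> x \<noteq> 0} \<subseteq> U)"

definition C2_boundary :: "(real^3) set \<Rightarrow> bool" where
  "C2_boundary D = (\<forall>p \<in> frontier D. \<exists>r > 0. \<exists>(R :: real^3 \<Rightarrow> real^3) (\<phi> :: real^2 \<Rightarrow> real).
      orthogonal_transformation R \<and> Ck 2 \<phi> \<and>
      D \<inter> ball p r = {x \<in> ball p r. R (x - p) $ 3 < \<phi> (vector [R (x - p) $ 1, R (x - p) $ 2])})"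

definition L2 :: "(real^3) set \<Rightarrow> (real^3 \<Rightarrow> real) \<Rightarrow> bool" where
  "L2 U u = (set_borel_measurable lebesgue U u \<and> set_integrable lebesgue U (\<lambda>x. (u x)\<^sup>2))"

definition locally_L1 :: "(real^3) set \<Rightarrow> (real^3 \<Rightarrow> real) \<Rightarrow> bool" where
  "locally_L1 U u = (\<forall>K. compact K \<and> K \<subseteq> U \<longrightarrow> set_integrable lebesgue K u)"

definition weak_grad :: "(real^3) set \<Rightarrow> (real^3 \<Rightarrow> real) \<Rightarrow> (real^3 \<Rightarrow> real^3) \<Rightarrow> bool" where
  "weak_grad U u G = (locally_L1 U u \<and> (\<forall>i. locally_L1 U (\<lambda>x. G x $ i)) \<and>
     (\<forall>\<phi>. test_fun U \<phi> \<longrightarrow> (\<forall>i.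
        (LINT x:U|lebesgue. u x * partial i \<phi> x) = - (LINT x:U|lebesgue. G x $ i * \<phi> x))))"

definition H1 :: "(real^3) set \<Rightarrow> (real^3 \<Rightarrow> real) \<Rightarrow> (real^3 \<Rightarrow> real^3) \<Rightarrow> bool" where
  "H1 U u G = (L2 U u \<and> (\<forall>i. L2 U (\<lambda>x. G x $ i)) \<and> weak_grad U u G)"

text \<open>u \<in> H^1_0(U): the H^1(U)-closure of C_c^\<infinity>(U) (i.e. u = 0 on the boundary in the trace sense).\<close>
definition H10 :: "(real^3) set \<Rightarrow> (real^3 \<Rightarrow> real) \<Rightarrow> (real^3 \<Rightarrow> real^3) \<Rightarrow> bool" where
  "H10 U u G = (H1 U u G \<and> (\<exists>\<psi> :: nat \<Rightarrow> real^3 \<Rightarrow> real. (\<forall>n. test_fun U (\<psi> n)) \<and>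
     (\<lambda>n. LINT x:U|lebesgue. (u x - \<psi> n x)\<^sup>2 + (norm (G x - grad (\<psi> n) x))\<^sup>2) \<longlonglongrightarrow> 0))"

text \<open>v \<in> H^1(R^3) is the weak solution of (\<Delta> - \<tau>^2) v + h = 0 in R^3.\<close>
definition helmholtz_R3 :: "real \<Rightarrow> (real^3 \<Rightarrow> real) \<Rightarrow> (real^3 \<Rightarrow> real) \<Rightarrow> (real^3 \<Rightarrow> real^3) \<Rightarrow> bool" where
  "helmholtz_R3 \<tau> h v G = (H1 UNIV v G \<and>
     (\<forall>\<phi> G\<phi>. H1 UNIV \<phi> G\<phi> \<longrightarrow>
        (LINT x|lebesgue. G x \<bullet> G\<phi> x + \<tau>\<^sup>2 * v x * \<phi> x) = (LINT x|lebesgue. h x * \<phi> x)))"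

text \<open>\<epsilon> \<in> H^1(\<Omega>) is the weak solution of (\<Delta> - \<tau>^2) \<epsilon> = 0 in \<Omega>, \<epsilon> = -v on \<partial>\<Omega>.\<close>
definition exterior_dirichlet ::
  "(real^3) set \<Rightarrow> real \<Rightarrow> (real^3 \<Rightarrow> real) \<Rightarrow> (real^3 \<Rightarrow> real^3) \<Rightarrow> (real^3 \<Rightarrow> real) \<Rightarrow> (real^3 \<Rightarrow> real^3) \<Rightarrow> bool" where
  "exterior_dirichlet \<Omega> \<tau> v Gv e Ge = (H1 \<Omega> e Ge \<and> H10 \<Omega> (\<lambda>x. e x + v x) (\<lambda>x. Ge x + Gv x) \<and>
     (\<forall>\<phi> G\<phi>. H10 \<Omega> \<phi> G\<phi> \<longrightarrow> (LINT x:\<Omega>|lebesgue. Ge x \<bullet> G\<phi> x + \<tau>\<^sup>2 * e x * \<phi> x) = 0))"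

text \<open>Z \<in> H^1(\<Omega>) is the weak solution of (\<Delta> - \<tau>^2) Z = F in \<Omega>, Z = 0 on \<partial>\<Omega>.\<close>
definition dirichlet_source ::
  "(real^3) set \<Rightarrow> real \<Rightarrow> (real^3 \<Rightarrow> real) \<Rightarrow> (real^3 \<Rightarrow> real) \<Rightarrow> (real^3 \<Rightarrow> real^3) \<Rightarrow> bool" where
  "dirichlet_source \<Omega> \<tau> F Z GZ = (H10 \<Omega> Z GZ \<and>
     (\<forall>\<phi> G\<phi>. H10 \<Omega> \<phi> G\<phi> \<longrightarrow>
        (LINT x:\<Omega>|lebesgue. GZ x \<bullet> G\<phi> x + \<tau>\<^sup>2 * Z x * \<phi> x) = - (LINT x:\<Omega>|lebesgue. F x * \<phi> x)))"

text \<open>Weak (energy) solution of the wave equation u_tt - \<Delta>u = 0 in \<Omega> \<times> (0,T),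
  u(.,0) = 0, u_t(.,0) = f, u = 0 on \<partial>\<Omega> \<times> (0,T):
  u \<in> C([0,T]; H^1_0(\<Omega>)) \<inter> C^1([0,T]; L^2(\<Omega>)) (jointly measurable representative), with
  Gu(.,t) the weak gradient of u(.,t), ut(.,t) the time derivative in L^2(\<Omega>), and
  d/dt (ut, \<phi>) + (\<nabla>u, \<nabla>\<phi>) = 0 for every \<phi> \<in> H^1_0(\<Omega>).\<close>
definition wave_sol ::
  "(real^3) set \<Rightarrow> real \<Rightarrow> (real^3 \<Rightarrow> real) \<Rightarrow> (real^3 \<Rightarrow> real \<Rightarrow> real) \<Rightarrow> (real^3 \<Rightarrow> real \<Rightarrow> real^3)
     \<Rightarrow> (real^3 \<Rightarrow> real \<Rightarrow> real) \<Rightarrow> bool" where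
  "wave_sol \<Omega> T f u Gu ut = (
     (\<lambda>p. indicator (\<Omega> \<times> {0..T}) p * u (fst p) (snd p)) \<in> borel_measurable (lebesgue \<Otimes>\<^sub>M lebesgue) \<and>
     (\<forall>t\<in>{0..T}. H10 \<Omega> (\<lambda>x. u x t) (\<lambda>x. Gu x t) \<and> L2 \<Omega> (\<lambda>x. ut x t)) \<and>
     (\<forall>t\<in>{0..T}. ((\<lambda>s. LINT x:\<Omega>|lebesgue. (u x s - u x t)\<^sup>2 + (norm (Gu x s - Gu x t))\<^sup>2) \<longlongrightarrow> 0)
                    (at t within {0..T})) \<and>
     (\<forall>t\<in>{0..T}. ((\<lambda>s. LINT x:\<Omega>|lebesgue. (ut x s - ut x t)\<^sup>2) \<longlongrightarrow> 0) (at t within {0..T})) \<and>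
     (\<forall>t\<in>{0..T}. ((\<lambda>s. LINT x:\<Omega>|lebesgue. ((u x s - u x t) / (s - t) - ut x t)\<^sup>2) \<longlongrightarrow> 0)
                    (at t within {0..T})) \<and>
     (\<forall>\<phi> G\<phi>. H10 \<Omega> \<phi> G\<phi> \<longrightarrow> (\<forall>t\<in>{0..T}.
        (LINT x:\<Omega>|lebesgue. ut x t * \<phi> x) - (LINT x:\<Omega>|lebesgue. ut x 0 * \<phi> x)
          = - integral {0..t} (\<lambda>s. LINT x:\<Omega>|lebesgue. Gu x s \<bullet> G\<phi> x))) \<and>
     (LINT x:\<Omega>|lebesgue. (u x 0)\<^sup>2) = 0 \<and>
     (LINT x:\<Omega>|lebesgue. (ut x 0 - f x)\<^sup>2) = 0)"

definition laplace_T :: "real \<Rightarrow> real \<Rightarrow> (real^3 \<Rightarrow> real \<Rightarrow> real) \<Rightarrow> real^3 \<Rightarrow> real" where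
  "laplace_T T \<tau> u x = (LINT t:{0..T}|lebesgue. exp (- \<tau> * t) * u x t)"

end

theory Submission
  imports Defs
begin

text \<open>Put \<open>\<phi> = \<epsilon>\<^sub>g + v\<^sub>g\<close>. It lies in \<open>H\<^sup>1\<^sub>0(\<Omega>)\<close> and solves \<open>(\<Delta> - \<tau>\<^sup>2) \<phi> + g = 0\<close> weakly
  in \<open>\<Omega>\<close>. Testing the wave equation with \<open>\<phi>\<close>, the function \<open>p(t) = (u(t), \<phi>)\<close> satisfies
  \<open>p'' = \<tau>\<^sup>2 p - (u(t), g)\<close> with \<open>p(0) = 0\<close>, \<open>p'(0) = (f, \<phi>)\<close>; multiplying by \<open>e\<^sup>-\<^sup>\<tau>\<^sup>t\<close>,
  integrating over \<open>[0,T]\<close> and using Fubini gives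
  \<open>\<integral>\<^sub>\<Omega> w\<^sub>f g = (f, \<phi>) - e\<^sup>-\<^sup>\<tau>\<^sup>T (F\<^sub>f, \<phi>)\<close>, and \<open>(F\<^sub>f, \<phi>)\<close> is minus the energy pairing
  of \<open>Z\<^sub>f\<close> with \<open>v\<^sub>g\<close>, since \<open>Z\<^sub>f \<in> H\<^sup>1\<^sub>0(\<Omega>)\<close> is energy-orthogonal to \<open>\<epsilon>\<^sub>g\<close>. The remaining
  stationary identity \<open>J + (\<epsilon>\<^sub>f, \<epsilon>\<^sub>g)\<^sub>E = -(f, \<epsilon>\<^sub>g)\<close> comes from testing the equations
  of \<open>v\<^sub>f\<close>, \<open>\<epsilon>\<^sub>f\<close>, \<open>\<epsilon>\<^sub>g\<close> against each other and splitting \<open>\<real>\<^sup>3\<close> into \<open>D\<close>, \<open>\<partial>D\<close> and \<open>\<Omega>\<close>;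
  \<open>\<partial>D\<close> is negligible because it is locally a \<open>C\<^sup>2\<close> graph.\<close>

section \<open>Square-integrable functions\<close>

lemma set_integral_real_eq_integral_indicator:
  "(LINT x:U|M. (f x :: real)) = (\<integral>x. indicator U x * f x \<partial>M)"
  by (simp add: set_lebesgue_integral_def)

lemma L2_measurable: "L2 U a \<Longrightarrow> (\<lambda>x. indicator U x * a x) \<in> borel_measurable lebesgue"
  by (simp add: L2_def set_borel_measurable_def)

lemma L2_square_integrable: "L2 U a \<Longrightarrow> integrable lebesgue (\<lambda>x. indicator U x * (a x)\<^sup>2)"
  by (simp add: L2_def set_integrable_def)

lemma L2I:
  "(\<lambda>x. indicator U x * a x) \<in> borel_measurable lebesgue \<Longrightarrow>
   integrable lebesgue (\<lambda>x. indicator U x * (a x)\<^sup>2) \<Longrightarrow> L2 U a"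
  by (simp add: L2_def set_borel_measurable_def set_integrable_def)

lemma abs_mult_le_sum_squares: "\<bar>p * q\<bar> \<le> p\<^sup>2 + (q::real)\<^sup>2"
proof -
  have "2 * (\<bar>p\<bar> * \<bar>q\<bar>) \<le> p\<^sup>2 + q\<^sup>2"
    using sum_squares_bound[of "\<bar>p\<bar>" "\<bar>q\<bar>"] by (simp add: mult.assoc)
  moreover have "0 \<le> \<bar>p\<bar> * \<bar>q\<bar>" by simp
  ultimately show ?thesis unfolding abs_mult by linarith
qed

lemma L2_mult_integrable:
  assumes "L2 U a" "L2 U b"
  shows "integrable lebesgue (\<lambda>x. indicator U x * (a x * b x))"
proof (rule Bochner_Integration.integrable_bound)
  show "integrable lebesgue (\<lambda>x. indicator U x * (a x)\<^sup>2 + indicator U x * (b x)\<^sup>2)"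
    using assms by (auto intro: L2_square_integrable)
  have "(\<lambda>x. (indicator U x * a x) * (indicator U x * b x)) \<in> borel_measurable lebesgue"
    using assms by (intro borel_measurable_times L2_measurable)
  then show "(\<lambda>x. indicator U x * (a x * b x)) \<in> borel_measurable lebesgue"
    by (rule measurable_cong[THEN iffD1, rotated]) (simp add: indicator_def)
  show "AE x in lebesgue. norm (indicator U x * (a x * b x))
          \<le> norm (indicator U x * (a x)\<^sup>2 + indicator U x * (b x)\<^sup>2)"
    using abs_mult_le_sum_squares by (intro AE_I2) (auto simp: indicator_def)
qed

lemma L2_add:
  assumes "L2 U a" "L2 U b"
  shows "L2 U (\<lambda>x. a x + b x)"
proof (rule L2I)
  show "(\<lambda>x. indicator U x * (a x + b x)) \<in> borel_measurable lebesgue"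
    using L2_measurable[OF assms(1)] L2_measurable[OF assms(2)] by (simp add: distrib_left)
  have "integrable lebesgue (\<lambda>x. indicator U x * (a x)\<^sup>2 + indicator U x * (b x)\<^sup>2
                                 + 2 * (indicator U x * (a x * b x)))"
    using L2_square_integrable[OF assms(1)] L2_square_integrable[OF assms(2)]
      L2_mult_integrable[OF assms] by auto
  moreover have "(\<lambda>x. indicator U x * (a x)\<^sup>2 + indicator U x * (b x)\<^sup>2
                         + 2 * (indicator U x * (a x * b x))) = (\<lambda>x. indicator U x * (a x + b x)\<^sup>2)"
    by (auto simp: power2_eq_square algebra_simps)
  ultimately show "integrable lebesgue (\<lambda>x. indicator U x * (a x + b x)\<^sup>2)" by simp
qed

lemma L2_cmult:
  assumes "L2 U a"
  shows "L2 U (\<lambda>x. c * a x)"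
proof (rule L2I)
  show "(\<lambda>x. indicator U x * (c * a x)) \<in> borel_measurable lebesgue"
    using L2_measurable[OF assms] by (simp add: mult.left_commute)
  have "integrable lebesgue (\<lambda>x. c\<^sup>2 * (indicator U x * (a x)\<^sup>2))"
    using L2_square_integrable[OF assms] by auto
  then show "integrable lebesgue (\<lambda>x. indicator U x * (c * a x)\<^sup>2)"
    by (simp add: power_mult_distrib mult.left_commute)
qed

lemma L2_diff: "L2 U a \<Longrightarrow> L2 U b \<Longrightarrow> L2 U (\<lambda>x. a x - b x)"
  using L2_add[of U a "\<lambda>x. - 1 * b x"] L2_cmult[of U b "- 1"] by simp

lemma L2_restrict:
  assumes "L2 UNIV a" "S \<in> sets lebesgue"
  shows "L2 S a"
proof (rule L2I)
  show "(\<lambda>x. indicator S x * a x) \<in> borel_measurable lebesgue"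
    using L2_measurable[OF assms(1)] assms(2) by simp
  show "integrable lebesgue (\<lambda>x. indicator S x * (a x)\<^sup>2)"
    using integrable_mult_indicator[OF assms(2) L2_square_integrable[OF assms(1)]] by simp
qed

definition L2_inner :: "(real^3) set \<Rightarrow> (real^3 \<Rightarrow> real) \<Rightarrow> (real^3 \<Rightarrow> real) \<Rightarrow> real" where
  "L2_inner U a b = (LINT x:U|lebesgue. a x * b x)"

lemma L2_inner_commute: "L2_inner U a b = L2_inner U b a"
  unfolding L2_inner_def by (simp add: mult.commute)

lemma L2_inner_add_right:
  assumes "L2 U a" "L2 U b" "L2 U c"
  shows "L2_inner U a (\<lambda>x. b x + c x) = L2_inner U a b + L2_inner U a c"
  unfolding L2_inner_def set_integral_real_eq_integral_indicator
  using L2_mult_integrable[OF assms(1,2)] L2_mult_integrable[OF assms(1,3)]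
  by (simp add: distrib_left)

lemma L2_inner_cmult_right: "L2_inner U a (\<lambda>x. c * b x) = c * L2_inner U a b"
  unfolding L2_inner_def set_integral_real_eq_integral_indicator by (simp add: algebra_simps)

lemma L2_inner_diff_right:
  assumes "L2 U a" "L2 U b" "L2 U c"
  shows "L2_inner U a (\<lambda>x. b x - c x) = L2_inner U a b - L2_inner U a c"
  using L2_inner_add_right[OF assms(1,2) L2_cmult[OF assms(3), of "- 1"]]
    L2_inner_cmult_right[of U a "- 1" c] by simp

lemma L2_inner_self_nonneg: "0 \<le> L2_inner U a a"
  unfolding L2_inner_def set_integral_real_eq_integral_indicator
  by (intro integral_nonneg_AE) (auto simp: indicator_def)

lemma L2_inner_self_eq: "L2_inner U a a = (LINT x:U|lebesgue. (a x)\<^sup>2)"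
  by (simp add: L2_inner_def power2_eq_square)

lemma L2_inner_diff_self:
  assumes "L2 U a" "L2 U b"
  shows "L2_inner U (\<lambda>x. a x - b x) (\<lambda>x. a x - b x)
           = L2_inner U a a - 2 * L2_inner U a b + L2_inner U b b"
  using L2_inner_diff_right[OF L2_diff[OF assms] assms] L2_inner_diff_right[OF assms(1) assms]
    L2_inner_diff_right[OF assms(2) assms] L2_inner_commute[of U "\<lambda>x. a x - b x" a]
    L2_inner_commute[of U "\<lambda>x. a x - b x" b] L2_inner_commute[of U b a]
  by linarith

text \<open>The quadratic \<open>t \<mapsto> \<parallel>t a - b\<parallel>\<^sup>2\<close> is nonnegative, so its discriminant is not positive.\<close>
lemma L2_Cauchy_Schwarz:
  assumes a: "L2 U a" and b: "L2 U b"
  shows "\<bar>L2_inner U a b\<bar> \<le> sqrt (L2_inner U a a) * sqrt (L2_inner U b b)"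
proof -
  define A B C where "A = L2_inner U a a" and "B = L2_inner U b b" and "C = L2_inner U a b"
  have quadratic: "0 \<le> t * (t * A) - 2 * (t * C) + B" for t
  proof -
    have ta: "L2 U (\<lambda>x. t * a x)" by (rule L2_cmult[OF a])
    have "L2_inner U (\<lambda>x. t * a x) (\<lambda>x. t * a x) = t * (t * A)"
      using L2_inner_commute[of U "\<lambda>x. t * a x" a]
      by (simp add: L2_inner_cmult_right A_def)
    moreover have "L2_inner U (\<lambda>x. t * a x) b = t * C"
      using L2_inner_commute[of U "\<lambda>x. t * a x" b] L2_inner_commute[of U b a]
      by (simp add: L2_inner_cmult_right C_def)
    ultimately show ?thesis
      using L2_inner_diff_self[OF ta b] L2_inner_self_nonneg[of U "\<lambda>x. t * a x - b x"]
      by (simp add: B_def)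
  qed
  have "C\<^sup>2 \<le> A * B"
  proof (cases "A = 0")
    case True
    then have le: "2 * (t * C) \<le> B" for t using quadratic[of t] by simp
    have "C = 0"
    proof (rule ccontr)
      assume "C \<noteq> 0"
      then have "2 * ((B + 1) / (2 * C) * C) = B + 1" by (simp add: field_simps)
      with le[of "(B + 1) / (2 * C)"] show False by simp
    qed
    then show ?thesis by (simp add: A_def B_def L2_inner_self_nonneg)
  next
    case False
    then have "0 < A" using L2_inner_self_nonneg[of U a] by (simp add: A_def)
    moreover have "0 \<le> (C / A) * ((C / A) * A) - 2 * ((C / A) * C) + B" by (rule quadratic)
    ultimately show ?thesis by (simp add: power2_eq_square field_simps)
  qed
  then have "\<bar>C\<bar> \<le> sqrt (A * B)" by (metis real_sqrt_abs real_sqrt_le_mono)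
  then show ?thesis by (simp add: A_def B_def C_def real_sqrt_mult)
qed

lemma L2_inner_eq_0_if_norm_eq_0:
  assumes "L2 U a" "L2 U b" "(LINT x:U|lebesgue. (b x)\<^sup>2) = 0"
  shows "L2_inner U a b = 0"
  using L2_Cauchy_Schwarz[OF assms(1,2)] assms(3) by (simp add: L2_inner_self_eq)

lemma set_integral_diff_eq_L2_inner:
  assumes "L2 U a" "L2 U b" "set_integrable lebesgue U k"
  shows "(LINT x:U|lebesgue. a x * b x - k x) = L2_inner U a b - (LINT x:U|lebesgue. k x)"
  using L2_mult_integrable[OF assms(1,2)] assms(3)
  by (simp add: L2_inner_def set_integral_real_eq_integral_indicator set_integrable_def
      right_diff_distrib)

lemma L2_inner_tendsto:
  assumes a: "L2 U a" and b: "L2 U b" and bs: "eventually (\<lambda>s. L2 U (bs s)) F"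
    and lim: "((\<lambda>s. L2_inner U (\<lambda>x. bs s x - b x) (\<lambda>x. bs s x - b x)) \<longlongrightarrow> 0) F"
  shows "((\<lambda>s. L2_inner U a (bs s)) \<longlongrightarrow> L2_inner U a b) F"
proof -
  define B where "B s = sqrt (L2_inner U a a) * sqrt (L2_inner U (\<lambda>x. bs s x - b x) (\<lambda>x. bs s x - b x))"
    for s
  have "(B \<longlongrightarrow> sqrt (L2_inner U a a) * sqrt 0) F"
    unfolding B_def by (intro tendsto_intros lim)
  then have "(B \<longlongrightarrow> 0) F" by simp
  moreover have "eventually (\<lambda>s. norm (L2_inner U a (bs s) - L2_inner U a b) \<le> B s) F"
    using bs by eventually_elim
      (use L2_Cauchy_Schwarz[OF a L2_diff] L2_inner_diff_right[OF a] b in \<open>auto simp: B_def\<close>)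
  ultimately have "((\<lambda>s. L2_inner U a (bs s) - L2_inner U a b) \<longlongrightarrow> 0) F"
    by (rule Lim_null_comparison[rotated])
  then show ?thesis by (simp add: LIM_zero_iff)
qed

section \<open>The energy form\<close>

definition L2_grad :: "(real^3) set \<Rightarrow> (real^3 \<Rightarrow> real) \<Rightarrow> (real^3 \<Rightarrow> real^3) \<Rightarrow> bool" where
  "L2_grad U a G \<longleftrightarrow> L2 U a \<and> (\<forall>i. L2 U (\<lambda>x. G x $ i))"

definition energy_form ::
  "(real^3) set \<Rightarrow> real \<Rightarrow> (real^3 \<Rightarrow> real) \<Rightarrow> (real^3 \<Rightarrow> real^3) \<Rightarrow> (real^3 \<Rightarrow> real) \<Rightarrow> (real^3 \<Rightarrow> real^3) \<Rightarrow> real"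
  where "energy_form U t a Ga b Gb = (LINT x:U|lebesgue. Ga x \<bullet> Gb x + t * a x * b x)"

lemma H1_imp_L2_grad: "H1 U a G \<Longrightarrow> L2_grad U a G"
  by (simp add: H1_def L2_grad_def)

lemma H10_imp_L2_grad: "H10 U a G \<Longrightarrow> L2_grad U a G"
  by (simp add: H10_def H1_imp_L2_grad)

lemma L2_grad_restrict: "L2_grad UNIV a G \<Longrightarrow> S \<in> sets lebesgue \<Longrightarrow> L2_grad S a G"
  by (simp add: L2_grad_def L2_restrict)

lemma L2_grad_add: "L2_grad U a G \<Longrightarrow> L2_grad U b H \<Longrightarrow> L2_grad U (\<lambda>x. a x + b x) (\<lambda>x. G x + H x)"
  by (simp add: L2_grad_def L2_add)

lemma L2_grad_diff: "L2_grad U a G \<Longrightarrow> L2_grad U b H \<Longrightarrow> L2_grad U (\<lambda>x. a x - b x) (\<lambda>x. G x - H x)"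
  by (simp add: L2_grad_def L2_diff)

lemma energy_form_commute: "energy_form U t a G b H = energy_form U t b H a G"
  unfolding energy_form_def by (simp add: inner_commute mult.commute mult.left_commute)

lemma energy_integrand_eq_sum:
  "indicator U x * (G x \<bullet> H x + t * a x * b x)
     = (\<Sum>i\<in>UNIV. indicator U x * (G x $ i * H x $ i)) + t * (indicator U x * (a x * b x))"
  by (simp add: inner_vec_def sum_distrib_left algebra_simps)

lemma L2_grad_mult_integrable:
  assumes "L2_grad U a G" "L2_grad U b H"
  shows "integrable lebesgue (\<lambda>x. indicator U x * (a x * b x))"
    and "integrable lebesgue (\<lambda>x. indicator U x * (G x $ i * H x $ i))"
proof -
  from assms have "L2 U a" "L2 U b" "L2 U (\<lambda>x. G x $ i)" "L2 U (\<lambda>x. H x $ i)"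
    by (simp_all add: L2_grad_def)
  then show "integrable lebesgue (\<lambda>x. indicator U x * (a x * b x))"
    and "integrable lebesgue (\<lambda>x. indicator U x * (G x $ i * H x $ i))"
    by (simp_all add: L2_mult_integrable)
qed

lemma energy_form_integrable:
  assumes "L2_grad U a G" "L2_grad U b H"
  shows "integrable lebesgue (\<lambda>x. indicator U x * (G x \<bullet> H x + t * a x * b x))"
  unfolding energy_integrand_eq_sum
  by (intro Bochner_Integration.integrable_add Bochner_Integration.integrable_sum
        integrable_mult_right L2_grad_mult_integrable[OF assms])

lemma energy_form_eq_sum:
  assumes "L2_grad U a G" "L2_grad U b H"
  shows "energy_form U t a G b H
           = (\<Sum>i\<in>UNIV. L2_inner U (\<lambda>x. G x $ i) (\<lambda>x. H x $ i)) + t * L2_inner U a b"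
proof -
  define F where "F i x = indicator U x * (G x $ i * H x $ i)" for i x
  have F: "integrable lebesgue (F i)" for i
    unfolding F_def by (rule L2_grad_mult_integrable(2)[OF assms])
  note ab = L2_grad_mult_integrable(1)[OF assms]
  have "energy_form U t a G b H
          = (\<integral>x. (\<Sum>i\<in>UNIV. F i x) + t * (indicator U x * (a x * b x)) \<partial>lebesgue)"
    unfolding energy_form_def set_integral_real_eq_integral_indicator energy_integrand_eq_sum F_def ..
  also have "\<dots> = (\<integral>x. (\<Sum>i\<in>UNIV. F i x) \<partial>lebesgue) + t * (\<integral>x. indicator U x * (a x * b x) \<partial>lebesgue)"
    using F ab by (subst Bochner_Integration.integral_add) auto
  also have "\<dots> = (\<Sum>i\<in>UNIV. integral\<^sup>L lebesgue (F i)) + t * (\<integral>x. indicator U x * (a x * b x) \<partial>lebesgue)"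
    using F by (subst Bochner_Integration.integral_sum) auto
  also have "\<dots> = (\<Sum>i\<in>UNIV. L2_inner U (\<lambda>x. G x $ i) (\<lambda>x. H x $ i)) + t * L2_inner U a b"
    by (simp add: L2_inner_def set_integral_real_eq_integral_indicator F_def[abs_def])
  finally show ?thesis .
qed

lemma energy_form_add_right:
  assumes a: "L2_grad U a G" and b1: "L2_grad U b1 K1" and b2: "L2_grad U b2 K2"
  shows "energy_form U t a G (\<lambda>x. b1 x + b2 x) (\<lambda>x. K1 x + K2 x)
           = energy_form U t a G b1 K1 + energy_form U t a G b2 K2"
proof -
  have "L2_inner U (\<lambda>x. G x $ i) (\<lambda>x. (K1 x + K2 x) $ i)
          = L2_inner U (\<lambda>x. G x $ i) (\<lambda>x. K1 x $ i) + L2_inner U (\<lambda>x. G x $ i) (\<lambda>x. K2 x $ i)" for i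
    using L2_inner_add_right[of U "\<lambda>x. G x $ i" "\<lambda>x. K1 x $ i" "\<lambda>x. K2 x $ i"] a b1 b2
    by (simp add: L2_grad_def)
  moreover have "L2_inner U a (\<lambda>x. b1 x + b2 x) = L2_inner U a b1 + L2_inner U a b2"
    using L2_inner_add_right[of U a b1 b2] a b1 b2 by (simp add: L2_grad_def)
  ultimately show ?thesis
    unfolding energy_form_eq_sum[OF a L2_grad_add[OF b1 b2]] energy_form_eq_sum[OF a b1]
      energy_form_eq_sum[OF a b2]
    by (simp add: sum.distrib algebra_simps)
qed

lemma energy_form_gradient_part:
  assumes "L2_grad U a G" "L2_grad U b H"
  shows "(LINT x:U|lebesgue. G x \<bullet> H x) = energy_form U t a G b H - t * L2_inner U a b"
  using energy_form_eq_sum[OF assms, of 0] energy_form_eq_sum[OF assms, of t]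
  by (simp add: energy_form_def)

lemma H1_dist_eq_energy_form:
  "(LINT x:U|lebesgue. (a x - b x)\<^sup>2 + (norm (G x - H x))\<^sup>2)
     = energy_form U 1 (\<lambda>x. a x - b x) (\<lambda>x. G x - H x) (\<lambda>x. a x - b x) (\<lambda>x. G x - H x)"
  unfolding energy_form_def power2_norm_eq_inner by (simp add: power2_eq_square add.commute)

lemma L2_dist_le_H1_dist:
  assumes "L2_grad U a G" "L2_grad U b H"
  shows "L2_inner U (\<lambda>x. a x - b x) (\<lambda>x. a x - b x)
           \<le> (LINT x:U|lebesgue. (a x - b x)\<^sup>2 + (norm (G x - H x))\<^sup>2)"
    and "L2_inner U (\<lambda>x. G x $ i - H x $ i) (\<lambda>x. G x $ i - H x $ i)
           \<le> (LINT x:U|lebesgue. (a x - b x)\<^sup>2 + (norm (G x - H x))\<^sup>2)"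
proof -
  have d: "L2_grad U (\<lambda>x. a x - b x) (\<lambda>x. G x - H x)" by (rule L2_grad_diff[OF assms])
  define S where "S = (\<Sum>j\<in>UNIV. L2_inner U (\<lambda>x. G x $ j - H x $ j) (\<lambda>x. G x $ j - H x $ j))"
  have "L2_inner U (\<lambda>x. G x $ i - H x $ i) (\<lambda>x. G x $ i - H x $ i) \<le> S"
    unfolding S_def by (rule member_le_sum) (auto intro: L2_inner_self_nonneg)
  moreover have "0 \<le> S" unfolding S_def by (intro sum_nonneg L2_inner_self_nonneg)
  moreover have "(LINT x:U|lebesgue. (a x - b x)\<^sup>2 + (norm (G x - H x))\<^sup>2)
                   = S + L2_inner U (\<lambda>x. a x - b x) (\<lambda>x. a x - b x)"
    unfolding H1_dist_eq_energy_form energy_form_eq_sum[OF d d] S_def by simp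
  ultimately show "L2_inner U (\<lambda>x. a x - b x) (\<lambda>x. a x - b x)
                     \<le> (LINT x:U|lebesgue. (a x - b x)\<^sup>2 + (norm (G x - H x))\<^sup>2)"
    and "L2_inner U (\<lambda>x. G x $ i - H x $ i) (\<lambda>x. G x $ i - H x $ i)
           \<le> (LINT x:U|lebesgue. (a x - b x)\<^sup>2 + (norm (G x - H x))\<^sup>2)"
    using L2_inner_self_nonneg[of U "\<lambda>x. a x - b x"] by linarith+
qed

lemma H1_tendsto_imp_L2_tendsto:
  assumes as: "eventually (\<lambda>s. L2_grad U (as s) (Gs s)) F" and a: "L2_grad U a G"
    and lim: "((\<lambda>s. LINT x:U|lebesgue. (as s x - a x)\<^sup>2 + (norm (Gs s x - G x))\<^sup>2) \<longlongrightarrow> 0) F"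
  shows "((\<lambda>s. L2_inner U (\<lambda>x. as s x - a x) (\<lambda>x. as s x - a x)) \<longlongrightarrow> 0) F"
    and "((\<lambda>s. L2_inner U (\<lambda>x. Gs s x $ i - G x $ i) (\<lambda>x. Gs s x $ i - G x $ i)) \<longlongrightarrow> 0) F"
  using as L2_dist_le_H1_dist[OF _ a]
  by (auto intro!: tendsto_sandwich[OF _ _ tendsto_const lim] elim!: eventually_mono
           simp: L2_inner_self_nonneg)

lemma energy_form_tendsto_right:
  assumes a: "L2_grad U a G" and b: "L2_grad U b H"
    and bs: "eventually (\<lambda>s. L2_grad U (bs s) (Hs s)) F"
    and lim: "((\<lambda>s. LINT x:U|lebesgue. (bs s x - b x)\<^sup>2 + (norm (Hs s x - H x))\<^sup>2) \<longlongrightarrow> 0) F"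
  shows "((\<lambda>s. energy_form U t a G (bs s) (Hs s)) \<longlongrightarrow> energy_form U t a G b H) F"
proof -
  have "((\<lambda>s. (\<Sum>i\<in>UNIV. L2_inner U (\<lambda>x. G x $ i) (\<lambda>x. Hs s x $ i)) + t * L2_inner U a (bs s))
          \<longlongrightarrow> (\<Sum>i\<in>UNIV. L2_inner U (\<lambda>x. G x $ i) (\<lambda>x. H x $ i)) + t * L2_inner U a b) F"
    using a b bs H1_tendsto_imp_L2_tendsto[OF bs b lim]
    by (intro tendsto_intros L2_inner_tendsto)
       (auto simp: L2_grad_def elim!: eventually_mono)
  moreover have "eventually (\<lambda>s. energy_form U t a G (bs s) (Hs s)
      = (\<Sum>i\<in>UNIV. L2_inner U (\<lambda>x. G x $ i) (\<lambda>x. Hs s x $ i)) + t * L2_inner U a (bs s)) F"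
    using bs by eventually_elim (rule energy_form_eq_sum[OF a])
  ultimately show ?thesis
    using energy_form_eq_sum[OF a b] by (simp add: tendsto_cong)
qed

section \<open>Integrals of compactly supported functions\<close>

lemma continuous_on_imp_lebesgue_measurable:
  fixes f :: "'a::euclidean_space \<Rightarrow> real"
  shows "continuous_on UNIV f \<Longrightarrow> f \<in> borel_measurable lebesgue"
  by (rule measurable_completion) (simp add: borel_measurable_continuous_onI)

lemma emeasure_lebesgue_compact_finite:
  fixes K :: "'a::euclidean_space set"
  shows "compact K \<Longrightarrow> emeasure lebesgue K < \<infinity>"
  using emeasure_compact_finite[of K] emeasure_completion[of K lborel] compact_imp_closed[of K] by auto

lemma L2_indicator_bounded:
  fixes B :: "(real^3) set"
  assumes S: "S \<in> sets lebesgue" and B: "bounded B" "B \<in> sets lebesgue"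
  shows "L2 S (indicator B)"
proof (rule L2I)
  have SB: "(\<lambda>x. indicator S x * (indicator B x :: real)) = indicator (S \<inter> B)"
           "(\<lambda>x. indicator S x * (indicator B x :: real)\<^sup>2) = indicator (S \<inter> B)"
    by (auto simp: indicator_def)
  show "(\<lambda>x. indicator S x * (indicator B x :: real)) \<in> borel_measurable lebesgue"
    unfolding SB using S B(2) by simp
  obtain e where "\<forall>x\<in>B. norm x \<le> e"
    using B(1) bounded_iff by blast
  then have "S \<inter> B \<subseteq> cball 0 e" by (auto simp: dist_norm)
  then have "emeasure lebesgue (S \<inter> B) \<le> emeasure lebesgue (cball (0::real^3) e)"
    by (rule emeasure_mono) simp
  also have "\<dots> < \<infinity>"
    by (rule emeasure_lebesgue_compact_finite) simp
  finally have "integrable lebesgue (indicator (S \<inter> B) :: real^3 \<Rightarrow> real)"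
    by (intro integrable_real_indicator sets.Int S B(2))
  then show "integrable lebesgue (\<lambda>x. indicator S x * (indicator B x :: real)\<^sup>2)"
    unfolding SB .
qed

lemma integrable_continuous_compact_support:
  fixes f :: "'a::euclidean_space \<Rightarrow> real"
  assumes c: "continuous_on UNIV f" and K: "compact K" and z: "\<And>x. x \<notin> K \<Longrightarrow> f x = 0"
  shows "integrable lebesgue f"
proof -
  obtain M where "\<And>x. x \<in> K \<Longrightarrow> norm (f x) \<le> M"
    using compact_imp_bounded[OF compact_continuous_image[OF continuous_on_subset[OF c] K]]
    by (auto simp: bounded_iff)
  then have "integrable lebesgue (\<lambda>x. indicator K x *\<^sub>R f x)"
    using K emeasure_lebesgue_compact_finite[OF K] continuous_on_imp_lebesgue_measurable[OF c]
    by (intro integrableI_bounded_set_indicator[where B=M]) (auto simp: compact_imp_closed)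
  also have "(\<lambda>x. indicator K x *\<^sub>R f x) = f"
    using z by (auto simp: indicator_def fun_eq_iff)
  finally show ?thesis .
qed

lemma L2_continuous_compact_support:
  fixes f :: "real^3 \<Rightarrow> real"
  assumes "continuous_on UNIV f" "compact K" "\<And>x. x \<notin> K \<Longrightarrow> f x = 0"
  shows "L2 UNIV f"
proof (rule L2I)
  show "(\<lambda>x. indicator UNIV x * f x) \<in> borel_measurable lebesgue"
    using continuous_on_imp_lebesgue_measurable[OF assms(1)] by simp
  have "integrable lebesgue (\<lambda>x. (f x)\<^sup>2)"
    using assms by (intro integrable_continuous_compact_support[OF _ assms(2)] continuous_intros) auto
  then show "integrable lebesgue (\<lambda>x. indicator UNIV x * (f x)\<^sup>2)" by simp
qed

lemma integral_lebesgue_translation: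
  fixes h :: "'a::euclidean_space \<Rightarrow> real"
  assumes "h \<in> borel_measurable lebesgue"
  shows "(\<integral>x. h (x + t) \<partial>lebesgue) = integral\<^sup>L lebesgue h"
proof -
  have shift: "(\<lambda>x::'a. t + (\<Sum>j\<in>Basis. (1 * (x \<bullet> j)) *\<^sub>R j)) = (\<lambda>x. x + t)"
    by (simp add: euclidean_representation add.commute)
  have "lebesgue = density (distr lebesgue lebesgue (\<lambda>x::'a. x + t)) (\<lambda>_. 1)"
    using lebesgue_affine_euclidean[of "\<lambda>_. 1" t] unfolding shift by simp
  then have L: "lebesgue = distr lebesgue lebesgue (\<lambda>x::'a. x + t)"
    by (simp add: density_1)
  have "(\<lambda>x::'a. x + t) \<in> lebesgue \<rightarrow>\<^sub>M lebesgue"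
    using lebesgue_affine_measurable[of "\<lambda>_. 1" t] unfolding shift by simp
  from integral_distr[OF this assms] show ?thesis
    by (simp flip: L)
qed

lemma has_real_derivative_along_line:
  fixes h :: "'a::euclidean_space \<Rightarrow> real"
  assumes "h differentiable at (x + r *\<^sub>R e)"
  shows "((\<lambda>r. h (x + r *\<^sub>R e)) has_real_derivative frechet_derivative h (at (x + r *\<^sub>R e)) e) (at r)"
proof -
  let ?D = "frechet_derivative h (at (x + r *\<^sub>R e))"
  have "((\<lambda>r. x + r *\<^sub>R e) has_derivative (\<lambda>s. s *\<^sub>R e)) (at r)"
    by (auto intro!: derivative_eq_intros)
  from has_derivative_compose[OF this assms[unfolded frechet_derivative_works]]
  have "((\<lambda>r. h (x + r *\<^sub>R e)) has_derivative (\<lambda>s. ?D (s *\<^sub>R e))) (at r)" .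
  moreover have "linear ?D"
    using assms unfolding frechet_derivative_works by (rule has_derivative_linear)
  ultimately show ?thesis
    by (simp add: has_field_derivative_def linear_cmul mult.commute[of _ "?D e"])
qed

lemma frechet_derivative_outside_support:
  fixes h :: "'a::euclidean_space \<Rightarrow> real"
  assumes "closed K" and "\<And>x. x \<notin> K \<Longrightarrow> h x = 0" and "x \<notin> K"
  shows "frechet_derivative h (at x) = (\<lambda>_. 0)"
proof -
  have "(h has_derivative (\<lambda>_. 0)) (at x)"
    using assms
    by (intro has_derivative_transform_within_open[where s="- K", OF has_derivative_const]) auto
  then show ?thesis using frechet_derivative_at by metis
qed

lemma integral_difference_quotient_eq_0:
  fixes h :: "'a::euclidean_space \<Rightarrow> real"
  assumes h: "continuous_on UNIV h" and K: "compact K" and z: "\<And>x. x \<notin> K \<Longrightarrow> h x = 0"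
  shows "(\<integral>x. (h (x + s *\<^sub>R e) - h x) / s \<partial>lebesgue) = 0"
proof -
  have "continuous_on UNIV (\<lambda>x. h (x + s *\<^sub>R e))"
    by (auto intro!: continuous_on_compose2[OF h] continuous_intros)
  moreover have "h (x + s *\<^sub>R e) = 0" if "x \<notin> (\<lambda>x. x - s *\<^sub>R e) ` K" for x
  proof (rule z)
    show "x + s *\<^sub>R e \<notin> K"
      using that by (metis add_diff_cancel image_eqI)
  qed
  ultimately have shifted: "integrable lebesgue (\<lambda>x. h (x + s *\<^sub>R e))"
    by (rule integrable_continuous_compact_support[OF _ compact_translation_subtract[OF K]])
  have "(\<integral>x. h (x + s *\<^sub>R e) \<partial>lebesgue) = integral\<^sup>L lebesgue h"
    by (rule integral_lebesgue_translation[OF continuous_on_imp_lebesgue_measurable[OF h]])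
  then show ?thesis
    using integrable_continuous_compact_support[OF h K z]
    by (simp add: Bochner_Integration.integral_diff[OF shifted])
qed

lemma difference_quotient_bound:
  fixes h :: "'a::euclidean_space \<Rightarrow> real"
  assumes dif: "\<And>y. h differentiable at y" and bound: "\<And>y. \<bar>frechet_derivative h (at y) e\<bar> \<le> M"
    and R: "\<And>x. x \<in> K \<Longrightarrow> norm x \<le> R" and z: "\<And>x. x \<notin> K \<Longrightarrow> h x = 0"
    and s: "0 < s" "s \<le> 1"
  shows "\<bar>(h (x + s *\<^sub>R e) - h x) / s\<bar> \<le> M * indicator (cball 0 (R + norm e)) x"
proof (cases "x \<in> cball 0 (R + norm e)")
  case True
  obtain z where "h (x + s *\<^sub>R e) - h (x + 0 *\<^sub>R e) = (s - 0) * frechet_derivative h (at (x + z *\<^sub>R e)) e"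
    using MVT2[of 0 s "\<lambda>r. h (x + r *\<^sub>R e)" "\<lambda>r. frechet_derivative h (at (x + r *\<^sub>R e)) e"]
      has_real_derivative_along_line[OF dif] s by auto
  then show ?thesis using True s bound by simp
next
  case False
  then have far: "R + norm e < norm x" by simp
  have "norm (s *\<^sub>R e) \<le> norm e"
    using mult_left_le_one_le[OF _ _ s(2), of "norm e"] s(1) by simp
  moreover have "norm x \<le> norm (x + s *\<^sub>R e) + norm (s *\<^sub>R e)"
    using norm_triangle_ineq4[of "x + s *\<^sub>R e" "s *\<^sub>R e"] by simp
  ultimately have "x \<notin> K" "x + s *\<^sub>R e \<notin> K"
    using R[of x] R[of "x + s *\<^sub>R e"] far norm_ge_zero[of e] by fastforce+
  then show ?thesis using False by (simp add: z)
qed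

lemma difference_quotient_tendsto:
  fixes h :: "'a::euclidean_space \<Rightarrow> real"
  assumes "h differentiable at x" and "filterlim s (at 0) sequentially"
  shows "(\<lambda>n. (h (x + s n *\<^sub>R e) - h x) / s n) \<longlonglongrightarrow> frechet_derivative h (at x) e"
proof -
  have "((\<lambda>r. (h (x + r *\<^sub>R e) - h x) / r) \<longlongrightarrow> frechet_derivative h (at x) e) (at 0)"
    using has_real_derivative_along_line[where h=h and x=x and r=0 and e=e] assms(1)
    by (simp add: DERIV_def)
  then show ?thesis by (rule filterlim_compose[OF _ assms(2)])
qed

text \<open>The difference quotients in direction \<open>e\<close> integrate to \<open>0\<close>, converge pointwise to
  the directional derivative and are dominated by a multiple of the indicator of a ball.\<close>
lemma integral_directional_derivative_compact_support:
  fixes h :: "'a::euclidean_space \<Rightarrow> real"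
  assumes dif: "\<And>y. h differentiable at y"
    and cont: "continuous_on UNIV (\<lambda>x. frechet_derivative h (at x) e)"
    and K: "compact K" and z: "\<And>x. x \<notin> K \<Longrightarrow> h x = 0"
  shows "(\<integral>x. frechet_derivative h (at x) e \<partial>lebesgue) = 0"
proof -
  define d where "d x = frechet_derivative h (at x) e" for x
  have d0: "d x = 0" if "x \<notin> K" for x
    using frechet_derivative_outside_support[OF compact_imp_closed[OF K] z that] by (simp add: d_def)
  obtain M where M: "\<And>x. x \<in> K \<Longrightarrow> norm (d x) \<le> M"
    using compact_imp_bounded[OF compact_continuous_image[OF continuous_on_subset[OF cont] K]]
    by (auto simp: bounded_iff d_def)
  have dM: "\<bar>d x\<bar> \<le> max M 0" for x
    using M[of x] d0[of x] by (cases "x \<in> K") auto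
  obtain R where R: "\<And>x. x \<in> K \<Longrightarrow> norm x \<le> R"
    using compact_imp_bounded[OF K] by (auto simp: bounded_iff)
  define s :: "nat \<Rightarrow> real" where "s n = inverse (real (Suc n))" for n
  have s: "0 < s n" "s n \<le> 1" for n by (auto simp: s_def field_simps)
  define Q where "Q n x = (h (x + s n *\<^sub>R e) - h x) / s n" for n x
  have hc: "continuous_on UNIV h"
    using dif by (simp add: continuous_at_imp_continuous_on differentiable_imp_continuous_within)
  have shifted: "continuous_on UNIV (\<lambda>x. h (x + s n *\<^sub>R e))" for n
    by (auto intro!: continuous_on_compose2[OF hc] continuous_intros)
  have "(\<lambda>n. integral\<^sup>L lebesgue (Q n)) \<longlonglongrightarrow> integral\<^sup>L lebesgue d"
  proof (rule integral_dominated_convergence[where w="\<lambda>x. max M 0 * indicator (cball 0 (R + norm e)) x"])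
    show "integrable lebesgue (\<lambda>x. max M 0 * indicator (cball 0 (R + norm e)) x)"
      using emeasure_lebesgue_compact_finite[of "cball 0 (R + norm e)"]
      by (intro integrable_mult_right integrable_real_indicator) auto
    show "Q n \<in> borel_measurable lebesgue" for n
      unfolding Q_def using continuous_on_imp_lebesgue_measurable[OF shifted]
        continuous_on_imp_lebesgue_measurable[OF hc] by measurable
    show "d \<in> borel_measurable lebesgue"
      using continuous_on_imp_lebesgue_measurable[OF cont] by (simp add: d_def[abs_def])
    have "filterlim s (at 0) sequentially"
      unfolding filterlim_at s_def using LIMSEQ_inverse_real_of_nat by auto
    then show "AE x in lebesgue. (\<lambda>n. Q n x) \<longlonglongrightarrow> d x"
      unfolding Q_def d_def by (intro AE_I2 difference_quotient_tendsto dif)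
    show "AE x in lebesgue. norm (Q n x) \<le> max M 0 * indicator (cball 0 (R + norm e)) x" for n
      using difference_quotient_bound[OF dif _ R z s, where M="max M 0"] dM
      by (simp add: Q_def d_def)
  qed
  moreover have "integral\<^sup>L lebesgue (Q n) = 0" for n
    unfolding Q_def by (rule integral_difference_quotient_eq_0[OF hc K z])
  ultimately have "(\<lambda>n. 0) \<longlonglongrightarrow> integral\<^sup>L lebesgue d" by simp
  from LIMSEQ_unique[OF this tendsto_const] show ?thesis by (simp add: d_def[abs_def])
qed

lemma test_funD:
  assumes "test_fun U \<psi>"
  shows test_fun_differentiable: "\<psi> differentiable at y"
    and test_fun_continuous: "continuous_on UNIV \<psi>"
    and test_fun_partial_continuous: "continuous_on UNIV (partial i \<psi>)"
proof -
  have "Ck (Suc 0) \<psi>" using assms by (simp add: test_fun_def smooth_fun_def)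
  then have "\<psi> differentiable_on UNIV" "continuous_on UNIV \<psi>" "continuous_on UNIV (partial i \<psi>)"
    by auto
  then show "\<psi> differentiable at y" "continuous_on UNIV \<psi>" "continuous_on UNIV (partial i \<psi>)"
    by (simp_all add: differentiable_on_def)
qed

lemma test_fun_support:
  assumes "test_fun U \<psi>"
  obtains K where "compact K" "K \<subseteq> U" "\<And>x. x \<notin> K \<Longrightarrow> \<psi> x = 0"
    "\<And>x i. x \<notin> K \<Longrightarrow> partial i \<psi> x = 0"
proof
  let ?K = "closure {x. \<psi> x \<noteq> 0}"
  show "compact ?K" "?K \<subseteq> U"
    using assms by (auto simp: test_fun_def)
  show z: "\<psi> x = 0" if "x \<notin> ?K" for x
    using contra_subsetD[OF closure_subset that] by simp
  show "partial i \<psi> x = 0" if "x \<notin> ?K" for x i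
    using frechet_derivative_outside_support[where K="?K" and h=\<psi>, OF closed_closure z that]
    by (simp add: partial_def)
qed

lemma frechet_derivative_mult:
  fixes \<psi> \<phi> :: "'a::real_normed_vector \<Rightarrow> real"
  assumes "\<psi> differentiable at x" "\<phi> differentiable at x"
  shows "frechet_derivative (\<lambda>x. \<psi> x * \<phi> x) (at x) e
           = \<psi> x * frechet_derivative \<phi> (at x) e + frechet_derivative \<psi> (at x) e * \<phi> x"
proof -
  have "((\<lambda>x. \<psi> x * \<phi> x) has_derivative
          (\<lambda>h. \<psi> x * frechet_derivative \<phi> (at x) h + frechet_derivative \<psi> (at x) h * \<phi> x)) (at x)"
    using has_derivative_mult[OF assms[unfolded frechet_derivative_works]] .
  from fun_cong[OF frechet_derivative_at[OF this], of e] show ?thesis by simp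
qed

lemma integration_by_parts_test_fun:
  fixes \<psi> \<phi> :: "real^'n::finite \<Rightarrow> real"
  assumes \<psi>: "test_fun U \<psi>" and \<phi>: "test_fun V \<phi>"
  shows "(\<integral>x. \<psi> x * partial i \<phi> x \<partial>lebesgue) = - (\<integral>x. partial i \<psi> x * \<phi> x \<partial>lebesgue)"
proof -
  obtain K where K: "compact K" and \<psi>0: "\<And>x. x \<notin> K \<Longrightarrow> \<psi> x = 0"
    and d\<psi>0: "\<And>x. x \<notin> K \<Longrightarrow> partial i \<psi> x = 0"
    using test_fun_support[OF \<psi>] by metis
  have product_rule: "frechet_derivative (\<lambda>x. \<psi> x * \<phi> x) (at x) (axis i 1)
                        = \<psi> x * partial i \<phi> x + partial i \<psi> x * \<phi> x" for x
    unfolding partial_def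
    by (rule frechet_derivative_mult[OF test_fun_differentiable[OF \<psi>] test_fun_differentiable[OF \<phi>]])
  have c1: "continuous_on UNIV (\<lambda>x. \<psi> x * partial i \<phi> x)"
    by (rule continuous_on_mult[OF test_fun_continuous[OF \<psi>] test_fun_partial_continuous[OF \<phi>]])
  have c2: "continuous_on UNIV (\<lambda>x. partial i \<psi> x * \<phi> x)"
    by (rule continuous_on_mult[OF test_fun_partial_continuous[OF \<psi>] test_fun_continuous[OF \<phi>]])
  have i1: "integrable lebesgue (\<lambda>x. \<psi> x * partial i \<phi> x)"
    using \<psi>0 by (intro integrable_continuous_compact_support[OF c1 K]) simp
  have i2: "integrable lebesgue (\<lambda>x. partial i \<psi> x * \<phi> x)"
    using d\<psi>0 by (intro integrable_continuous_compact_support[OF c2 K]) simp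
  have "(\<integral>x. frechet_derivative (\<lambda>x. \<psi> x * \<phi> x) (at x) (axis i 1) \<partial>lebesgue) = 0"
  proof (rule integral_directional_derivative_compact_support[OF _ _ K])
    show "(\<lambda>x. \<psi> x * \<phi> x) differentiable at y" for y
      by (intro differentiable_mult test_fun_differentiable[OF \<psi>] test_fun_differentiable[OF \<phi>])
    show "continuous_on UNIV (\<lambda>x. frechet_derivative (\<lambda>x. \<psi> x * \<phi> x) (at x) (axis i 1))"
      unfolding product_rule by (rule continuous_on_add[OF c1 c2])
    show "\<psi> x * \<phi> x = 0" if "x \<notin> K" for x
      by (simp add: \<psi>0[OF that])
  qed
  then have "(\<integral>x. \<psi> x * partial i \<phi> x + partial i \<psi> x * \<phi> x \<partial>lebesgue) = 0"
    unfolding product_rule .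
  then show ?thesis
    using Bochner_Integration.integral_add[OF i1 i2] by linarith
qed

lemma test_fun_H1:
  fixes \<psi> :: "real^3 \<Rightarrow> real"
  assumes \<psi>: "test_fun U \<psi>"
  shows "H1 UNIV \<psi> (grad \<psi>)"
proof -
  obtain K where K: "compact K" and \<psi>0: "\<And>x. x \<notin> K \<Longrightarrow> \<psi> x = 0"
    and d\<psi>0: "\<And>x i. x \<notin> K \<Longrightarrow> grad \<psi> x $ i = 0"
    using test_fun_support[OF \<psi>] unfolding grad_def by (metis vec_lambda_beta)
  have cont: "continuous_on UNIV (\<lambda>x. grad \<psi> x $ i)" for i
    unfolding grad_def using test_fun_partial_continuous[OF \<psi>] by simp
  have integrable: "integrable lebesgue \<psi>" "integrable lebesgue (\<lambda>x. grad \<psi> x $ i)" for i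
    using integrable_continuous_compact_support[OF test_fun_continuous[OF \<psi>] K \<psi>0]
      integrable_continuous_compact_support[OF cont K d\<psi>0] by auto
  have "L2 UNIV \<psi>" "L2 UNIV (\<lambda>x. grad \<psi> x $ i)" for i
    using L2_continuous_compact_support[OF test_fun_continuous[OF \<psi>] K \<psi>0]
      L2_continuous_compact_support[OF cont K d\<psi>0] by auto
  moreover have "locally_L1 UNIV \<psi>" "locally_L1 UNIV (\<lambda>x. grad \<psi> x $ i)" for i
    unfolding locally_L1_def set_integrable_def
    using integrable_mult_indicator[OF _ integrable(1)] integrable_mult_indicator[OF _ integrable(2)]
    by (auto simp: compact_imp_closed)
  moreover have "(LINT x:UNIV|lebesgue. \<psi> x * partial i \<phi> x)
                   = - (LINT x:UNIV|lebesgue. grad \<psi> x $ i * \<phi> x)" if "test_fun UNIV \<phi>" for \<phi> i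
    using integration_by_parts_test_fun[OF \<psi> that, of i]
    by (simp add: grad_def set_integral_real_eq_integral_indicator)
  ultimately show ?thesis
    unfolding H1_def weak_grad_def by blast
qed

lemma integral_eq_set_integral_if_vanishes:
  fixes f :: "'a \<Rightarrow> real"
  assumes "\<And>x. x \<notin> S \<Longrightarrow> f x = 0"
  shows "integral\<^sup>L M f = (LINT x:S|M. f x)"
  unfolding set_integral_real_eq_integral_indicator
  by (rule Bochner_Integration.integral_cong) (auto simp: indicator_def assms)

lemma test_fun_vanishes_outside:
  fixes \<psi> :: "real^'n::finite \<Rightarrow> real"
  assumes \<psi>: "test_fun U \<psi>" and "x \<notin> U"
  shows "\<psi> x = 0" and "grad \<psi> x = 0"
proof -
  obtain K where "K \<subseteq> U" "\<And>x. x \<notin> K \<Longrightarrow> \<psi> x = 0" "\<And>x i. x \<notin> K \<Longrightarrow> partial i \<psi> x = 0"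
    using test_fun_support[OF \<psi>] by metis
  with assms(2) show "\<psi> x = 0" "grad \<psi> x = 0"
    by (auto simp: vec_eq_iff grad_def)
qed

section \<open>Weak solutions tested against \<open>H\<^sup>1\<^sub>0\<close>\<close>

text \<open>For test functions supported in \<open>\<Omega>\<close> the integrals over \<open>\<real>\<^sup>3\<close> and over \<open>\<Omega>\<close>
  coincide; a general element of \<open>H\<^sup>1\<^sub>0(\<Omega>)\<close> is an \<open>H\<^sup>1\<close>-limit of such test functions.\<close>
lemma helmholtz_R3_on_H10:
  assumes hel: "helmholtz_R3 \<tau> h v Gv" and h: "L2 \<Omega> h" and \<Omega>: "\<Omega> \<in> sets lebesgue"
    and a: "H10 \<Omega> a Ga"
  shows "energy_form \<Omega> (\<tau>\<^sup>2) v Gv a Ga = L2_inner \<Omega> h a"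
proof -
  obtain \<psi> :: "nat \<Rightarrow> real^3 \<Rightarrow> real" where tf: "\<And>n. test_fun \<Omega> (\<psi> n)"
    and conv: "(\<lambda>n. LINT x:\<Omega>|lebesgue. (a x - \<psi> n x)\<^sup>2 + (norm (Ga x - grad (\<psi> n) x))\<^sup>2) \<longlonglongrightarrow> 0"
    using a by (auto simp: H10_def)
  have conv': "(\<lambda>n. LINT x:\<Omega>|lebesgue. (\<psi> n x - a x)\<^sup>2 + (norm (grad (\<psi> n) x - Ga x))\<^sup>2) \<longlonglongrightarrow> 0"
    using conv by (simp add: power2_commute norm_minus_commute)
  have v: "L2_grad \<Omega> v Gv"
    using hel \<Omega> by (simp add: helmholtz_R3_def H1_imp_L2_grad L2_grad_restrict)
  have aL: "L2_grad \<Omega> a Ga" by (rule H10_imp_L2_grad[OF a])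
  have \<psi>H: "H1 UNIV (\<psi> n) (grad (\<psi> n))" for n by (rule test_fun_H1[OF tf])
  have \<psi>L: "L2_grad \<Omega> (\<psi> n) (grad (\<psi> n))" for n
    using \<psi>H \<Omega> by (simp add: H1_imp_L2_grad L2_grad_restrict)
  have approx: "energy_form \<Omega> (\<tau>\<^sup>2) v Gv (\<psi> n) (grad (\<psi> n)) = L2_inner \<Omega> h (\<psi> n)" for n
  proof -
    have "(LINT x|lebesgue. Gv x \<bullet> grad (\<psi> n) x + \<tau>\<^sup>2 * v x * \<psi> n x) = (LINT x|lebesgue. h x * \<psi> n x)"
      using hel \<psi>H[of n] by (simp add: helmholtz_R3_def)
    moreover have "(LINT x|lebesgue. Gv x \<bullet> grad (\<psi> n) x + \<tau>\<^sup>2 * v x * \<psi> n x)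
                     = energy_form \<Omega> (\<tau>\<^sup>2) v Gv (\<psi> n) (grad (\<psi> n))"
      unfolding energy_form_def
      by (rule integral_eq_set_integral_if_vanishes) (simp add: test_fun_vanishes_outside[OF tf])
    moreover have "(LINT x|lebesgue. h x * \<psi> n x) = L2_inner \<Omega> h (\<psi> n)"
      unfolding L2_inner_def
      by (rule integral_eq_set_integral_if_vanishes) (simp add: test_fun_vanishes_outside[OF tf])
    ultimately show ?thesis by simp
  qed
  have "(\<lambda>n. energy_form \<Omega> (\<tau>\<^sup>2) v Gv (\<psi> n) (grad (\<psi> n))) \<longlonglongrightarrow> energy_form \<Omega> (\<tau>\<^sup>2) v Gv a Ga"
    by (rule energy_form_tendsto_right[OF v aL _ conv']) (simp add: \<psi>L)
  moreover have "(\<lambda>n. L2_inner \<Omega> h (\<psi> n)) \<longlonglongrightarrow> L2_inner \<Omega> h a"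
    using aL \<psi>L H1_tendsto_imp_L2_tendsto(1)[OF _ aL conv'] h
    by (intro L2_inner_tendsto) (auto simp: L2_grad_def)
  ultimately show ?thesis
    unfolding approx using LIMSEQ_unique by blast
qed

section \<open>Domains with \<open>C\<^sup>2\<close> boundary\<close>

lemma vector_2_eq_axis: "(vector [a, b] :: real^2) = a *\<^sub>R axis 1 1 + b *\<^sub>R axis 2 1"
  by (simp add: vec_eq_iff forall_2 axis_def)

lemma C2_boundary_frontier_subset_graph:
  fixes D :: "(real^3) set" and \<phi> :: "real^2 \<Rightarrow> real" and R :: "real^3 \<Rightarrow> real^3"
  assumes "open D" and R: "orthogonal_transformation R" and \<phi>: "continuous_on UNIV \<phi>"
    and D: "D \<inter> ball p r = {x \<in> ball p r. R (x - p) $ 3 < \<phi> (vector [R (x - p) $ 1, R (x - p) $ 2])}"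
  shows "frontier D \<inter> ball p r
           \<subseteq> range (\<lambda>y. p + inv R (y $ 1 *\<^sub>R axis 1 1 + y $ 2 *\<^sub>R axis 2 1 + \<phi> y *\<^sub>R axis 3 1))"
proof
  fix x assume x: "x \<in> frontier D \<inter> ball p r"
  define z where "z = R (x - p)"
  define y :: "real^2" where "y = vector [z $ 1, z $ 2]"
  have "x \<notin> D" "x \<in> closure D"
    using x \<open>open D\<close> by (auto simp: frontier_def interior_open)
  have cR: "continuous_on UNIV R"
    using orthogonal_transformation_linear[OF R] by (simp add: linear_continuous_on linear_conv_bounded_linear)
  have "z $ 3 = \<phi> y"
  proof (rule linorder_cases)
    assume "z $ 3 < \<phi> y"
    then have "x \<in> D" using x D by (auto simp: z_def y_def)
    with \<open>x \<notin> D\<close> show ?thesis by simp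
  next
    assume above: "\<phi> y < z $ 3"
    \<comment> \<open>points strictly above the graph form an open neighbourhood of \<open>x\<close> missing \<open>D\<close>\<close>
    define V where "V = ball p r \<inter> {x'. \<phi> (vector [R (x' - p) $ 1, R (x' - p) $ 2]) < R (x' - p) $ 3}"
    have "open V"
      unfolding V_def vector_2_eq_axis
      by (intro open_Int open_ball open_Collect_less continuous_on_compose2[OF \<phi>]
            continuous_intros continuous_on_compose2[OF cR]) auto
    moreover have "x \<in> V" using x above by (simp add: V_def z_def y_def)
    moreover have "V \<inter> D = {}"
    proof (intro equals0I)
      fix x' assume x': "x' \<in> V \<inter> D"
      then have "x' \<in> D \<inter> ball p r" by (simp add: V_def)
      then have "R (x' - p) $ 3 < \<phi> (vector [R (x' - p) $ 1, R (x' - p) $ 2])"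
        unfolding D by simp
      with x' show False by (simp add: V_def)
    qed
    ultimately show ?thesis
      using \<open>x \<in> closure D\<close> open_Int_closure_eq_empty by blast
  qed simp
  then have "z = y $ 1 *\<^sub>R axis 1 1 + y $ 2 *\<^sub>R axis 2 1 + \<phi> y *\<^sub>R axis 3 1"
    by (simp add: vec_eq_iff forall_3 axis_def y_def)
  moreover have "x = p + inv R z"
    using inv_f_f[OF orthogonal_transformation_inj[OF R]] by (simp add: z_def)
  ultimately show "x \<in> range (\<lambda>y. p + inv R (y $ 1 *\<^sub>R axis 1 1 + y $ 2 *\<^sub>R axis 2 1 + \<phi> y *\<^sub>R axis 3 1))"
    by auto
qed

lemma negligible_rotated_graph:
  fixes \<phi> :: "real^2 \<Rightarrow> real" and R :: "real^3 \<Rightarrow> real^3"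
  assumes R: "orthogonal_transformation R" and \<phi>: "\<phi> differentiable_on UNIV"
  shows "negligible (range (\<lambda>y. p + inv R (y $ 1 *\<^sub>R axis 1 1 + y $ 2 *\<^sub>R axis 2 1 + \<phi> y *\<^sub>R axis 3 1)))"
proof (rule negligible_differentiable_image_lowdim)
  have "linear (inv R)"
    using orthogonal_transformation_inv[OF R] by (rule orthogonal_transformation_linear)
  then have dR: "inv R differentiable at w" for w
    by (simp add: linear_imp_differentiable linear_conv_bounded_linear)
  have dc: "(\<lambda>y::real^2. y $ k) differentiable at w" for k w
    by (simp add: bounded_linear_imp_differentiable bounded_linear_vec_nth)
  show "(\<lambda>y. p + inv R (y $ 1 *\<^sub>R axis 1 1 + y $ 2 *\<^sub>R axis 2 1 + \<phi> y *\<^sub>R axis 3 1)) differentiable_on UNIV"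
    unfolding differentiable_on_def
  proof
    fix w :: "real^2"
    have "(\<lambda>y. y $ 1 *\<^sub>R axis 1 1 + y $ 2 *\<^sub>R axis 2 1 + \<phi> y *\<^sub>R (axis 3 1 :: real^3)) differentiable at w"
      using \<phi> dc by (auto simp: differentiable_on_def intro!: differentiable_compose derivative_intros)
    then have "(inv R \<circ> (\<lambda>y. y $ 1 *\<^sub>R axis 1 1 + y $ 2 *\<^sub>R axis 2 1 + \<phi> y *\<^sub>R axis 3 1)) differentiable at w"
      using differentiable_chain_at dR by blast
    then show "(\<lambda>y. p + inv R (y $ 1 *\<^sub>R axis 1 1 + y $ 2 *\<^sub>R axis 2 1 + \<phi> y *\<^sub>R axis 3 1))
                 differentiable at w within UNIV"
      by (auto simp: o_def intro!: derivative_intros)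
  qed
qed simp

lemma C2_boundary_negligible_frontier:
  fixes D :: "(real^3) set"
  assumes "bounded D" "open D" "C2_boundary D"
  shows "negligible (frontier D)"
proof -
  have local: "\<exists>r>0. \<exists>N. negligible N \<and> frontier D \<inter> ball p r \<subseteq> N" if p: "p \<in> frontier D" for p
  proof -
    obtain r and R :: "real^3 \<Rightarrow> real^3" and \<phi> :: "real^2 \<Rightarrow> real"
      where r: "r > 0" and R: "orthogonal_transformation R" and \<phi>: "Ck 2 \<phi>"
        and D: "D \<inter> ball p r = {x \<in> ball p r. R (x - p) $ 3 < \<phi> (vector [R (x - p) $ 1, R (x - p) $ 2])}"
      using assms(3) p unfolding C2_boundary_def by blast
    have "Ck (Suc (Suc 0)) \<phi>" using \<phi> by (simp add: numeral_2_eq_2)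
    then have d: "\<phi> differentiable_on UNIV" and c: "continuous_on UNIV \<phi>" by auto
    show ?thesis
      using r C2_boundary_frontier_subset_graph[OF assms(2) R c D] negligible_rotated_graph[OF R d, of p]
      by blast
  qed
  obtain r where r: "\<And>p. p \<in> frontier D \<Longrightarrow> r p > 0 \<and> (\<exists>N. negligible N \<and> frontier D \<inter> ball p (r p) \<subseteq> N)"
    using local by metis
  then obtain N where N: "\<And>p. p \<in> frontier D \<Longrightarrow> negligible (N p) \<and> frontier D \<inter> ball p (r p) \<subseteq> N p"
    by metis
  have cover: "frontier D \<subseteq> (\<Union>p\<in>frontier D. ball p (r p))"
    using r by force
  obtain C where C: "C \<subseteq> frontier D" "finite C" "frontier D \<subseteq> (\<Union>p\<in>C. ball p (r p))"
    using compactE_image[OF compact_frontier_bounded[OF assms(1)] _ cover] by blast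
  then have "frontier D \<subseteq> \<Union> (N ` C)"
    using N by blast
  moreover have "negligible (\<Union> (N ` C))"
    using C N by (intro negligible_Union) auto
  ultimately show ?thesis using negligible_subset by blast
qed

lemma integral_split_negligible_frontier:
  fixes D :: "(real^3) set" and X :: "real^3 \<Rightarrow> real"
  assumes "open D" and "negligible (frontier D)" and X: "integrable lebesgue X"
  shows "integral\<^sup>L lebesgue X = (LINT x:D|lebesgue. X x) + (LINT x:(- closure D)|lebesgue. X x)"
proof -
  have i1: "integrable lebesgue (\<lambda>x. indicator D x * X x)"
    using integrable_mult_indicator[of D lebesgue X] X \<open>open D\<close> by simp
  have i2: "integrable lebesgue (\<lambda>x. indicator (- closure D) x * X x)"
    using integrable_mult_indicator[of "- closure D" lebesgue X] X by simp
  have "{x \<in> space lebesgue. X x \<noteq> indicator D x * X x + indicator (- closure D) x * X x} \<subseteq> frontier D"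
    using \<open>open D\<close> closure_subset by (auto simp: frontier_def interior_open indicator_def)
  then have "AE x in lebesgue. X x = indicator D x * X x + indicator (- closure D) x * X x"
    using assms(2) by (intro AE_I') (simp_all add: negligible_iff_null_sets)
  then have "integral\<^sup>L lebesgue X
               = (\<integral>x. indicator D x * X x + indicator (- closure D) x * X x \<partial>lebesgue)"
    by (rule integral_cong_AE[rotated 2]) (use X i1 i2 in auto)
  also have "\<dots> = (LINT x:D|lebesgue. X x) + (LINT x:(- closure D)|lebesgue. X x)"
    unfolding set_integral_real_eq_integral_indicator using i1 i2 by simp
  finally show ?thesis .
qed

section \<open>Time regularity of the wave solution\<close>

lemma eventually_at_within_of_mem: "(\<And>s. s \<in> S \<Longrightarrow> P s) \<Longrightarrow> eventually P (at t within S)"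
  unfolding eventually_at_filter by (auto intro!: always_eventually)

lemma wave_solD:
  assumes "wave_sol \<Omega> T f u Gu ut" and "t \<in> {0..T}"
  shows wave_sol_H10: "H10 \<Omega> (\<lambda>x. u x t) (\<lambda>x. Gu x t)"
    and wave_sol_L2: "L2 \<Omega> (\<lambda>x. u x t)"
    and wave_sol_L2_velocity: "L2 \<Omega> (\<lambda>x. ut x t)"
proof -
  show H10: "H10 \<Omega> (\<lambda>x. u x t) (\<lambda>x. Gu x t)" and "L2 \<Omega> (\<lambda>x. ut x t)"
    using assms unfolding wave_sol_def by blast+
  from H10 show "L2 \<Omega> (\<lambda>x. u x t)" by (simp add: H10_def H1_def)
qed

lemma wave_sol_L2_dist_tendsto:
  assumes w: "wave_sol \<Omega> T f u Gu ut" and t: "t \<in> {0..T}"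
  shows "((\<lambda>s. L2_inner \<Omega> (\<lambda>x. u x s - u x t) (\<lambda>x. u x s - u x t)) \<longlongrightarrow> 0) (at t within {0..T})"
proof (rule H1_tendsto_imp_L2_tendsto(1))
  show "eventually (\<lambda>s. L2_grad \<Omega> (\<lambda>x. u x s) (\<lambda>x. Gu x s)) (at t within {0..T})"
    by (intro eventually_at_within_of_mem H10_imp_L2_grad wave_sol_H10[OF w])
  show "L2_grad \<Omega> (\<lambda>x. u x t) (\<lambda>x. Gu x t)"
    by (intro H10_imp_L2_grad wave_sol_H10[OF w t])
  show "((\<lambda>s. LINT x:\<Omega>|lebesgue. (u x s - u x t)\<^sup>2 + (norm (Gu x s - Gu x t))\<^sup>2) \<longlongrightarrow> 0)
          (at t within {0..T})"
    using w t unfolding wave_sol_def by blast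
qed

lemma wave_sol_L2_inner_tendsto:
  assumes w: "wave_sol \<Omega> T f u Gu ut" and \<psi>: "L2 \<Omega> \<psi>" and t: "t \<in> {0..T}"
  shows "((\<lambda>s. L2_inner \<Omega> \<psi> (\<lambda>x. u x s)) \<longlongrightarrow> L2_inner \<Omega> \<psi> (\<lambda>x. u x t)) (at t within {0..T})"
  by (intro L2_inner_tendsto[OF \<psi> wave_sol_L2[OF w t]] eventually_at_within_of_mem
      wave_sol_L2[OF w] wave_sol_L2_dist_tendsto[OF w t])

lemma wave_sol_L2_inner_continuous:
  assumes "wave_sol \<Omega> T f u Gu ut" and "L2 \<Omega> \<psi>"
  shows "continuous_on {0..T} (\<lambda>s. L2_inner \<Omega> \<psi> (\<lambda>x. u x s))"
  unfolding continuous_on_def using wave_sol_L2_inner_tendsto[OF assms] by blast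

lemma wave_sol_L2_inner_has_derivative:
  assumes w: "wave_sol \<Omega> T f u Gu ut" and \<phi>: "L2 \<Omega> \<phi>" and t: "t \<in> {0..T}"
  shows "((\<lambda>s. L2_inner \<Omega> \<phi> (\<lambda>x. u x s)) has_real_derivative L2_inner \<Omega> \<phi> (\<lambda>x. ut x t))
           (at t within {0..T})"
proof -
  define q where "q s x = (u x s - u x t) / (s - t)" for s x
  have q: "q s = (\<lambda>x. inverse (s - t) * (u x s - u x t))" for s
    by (simp add: q_def fun_eq_iff divide_inverse mult.commute)
  have qL: "L2 \<Omega> (q s)" if "s \<in> {0..T}" for s
    unfolding q by (intro L2_cmult L2_diff wave_sol_L2[OF w] that t)
  have lim: "((\<lambda>s. L2_inner \<Omega> \<phi> (q s)) \<longlongrightarrow> L2_inner \<Omega> \<phi> (\<lambda>x. ut x t)) (at t within {0..T})"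
  proof (rule L2_inner_tendsto[OF \<phi> wave_sol_L2_velocity[OF w t]])
    show "eventually (\<lambda>s. L2 \<Omega> (q s)) (at t within {0..T})"
      by (rule eventually_at_within_of_mem[OF qL])
    show "((\<lambda>s. L2_inner \<Omega> (\<lambda>x. q s x - ut x t) (\<lambda>x. q s x - ut x t)) \<longlongrightarrow> 0) (at t within {0..T})"
      using w t unfolding wave_sol_def L2_inner_self_eq q_def by blast
  qed
  have "eventually (\<lambda>s. L2_inner \<Omega> \<phi> (q s)
          = (L2_inner \<Omega> \<phi> (\<lambda>x. u x s) - L2_inner \<Omega> \<phi> (\<lambda>x. u x t)) / (s - t)) (at t within {0..T})"
  proof (rule eventually_at_within_of_mem)
    fix s assume "s \<in> {0..T}"
    then show "L2_inner \<Omega> \<phi> (q s)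
                 = (L2_inner \<Omega> \<phi> (\<lambda>x. u x s) - L2_inner \<Omega> \<phi> (\<lambda>x. u x t)) / (s - t)"
      unfolding q L2_inner_cmult_right
      using L2_inner_diff_right[OF \<phi> wave_sol_L2[OF w] wave_sol_L2[OF w t]]
      by (simp add: divide_inverse mult.commute)
  qed
  then show ?thesis
    unfolding has_field_derivative_iff by (rule Lim_transform_eventually[OF lim])
qed

lemma wave_sol_L2_norm_bounded:
  assumes w: "wave_sol \<Omega> T f u Gu ut"
  obtains C where "\<And>s. s \<in> {0..T} \<Longrightarrow> L2_inner \<Omega> (\<lambda>x. u x s) (\<lambda>x. u x s) \<le> C"
proof -
  have "continuous_on {0..T} (\<lambda>s. L2_inner \<Omega> (\<lambda>x. u x s) (\<lambda>x. u x s))"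
    unfolding continuous_on_def
  proof
    fix t assume t: "t \<in> {0..T}"
    let ?n = "\<lambda>s. L2_inner \<Omega> (\<lambda>x. u x s) (\<lambda>x. u x s)"
    have "((\<lambda>s. L2_inner \<Omega> (\<lambda>x. u x s - u x t) (\<lambda>x. u x s - u x t)
                 + 2 * L2_inner \<Omega> (\<lambda>x. u x t) (\<lambda>x. u x s) - ?n t)
            \<longlongrightarrow> 0 + 2 * ?n t - ?n t) (at t within {0..T})"
      by (intro tendsto_intros wave_sol_L2_dist_tendsto[OF w t]
            wave_sol_L2_inner_tendsto[OF w wave_sol_L2[OF w t] t])
    moreover have "L2_inner \<Omega> (\<lambda>x. u x s - u x t) (\<lambda>x. u x s - u x t)
                     + 2 * L2_inner \<Omega> (\<lambda>x. u x t) (\<lambda>x. u x s) - ?n t = ?n s"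
      if "s \<in> {0..T}" for s
      using L2_inner_diff_self[OF wave_sol_L2[OF w that] wave_sol_L2[OF w t]]
        L2_inner_commute[of \<Omega> "\<lambda>x. u x t" "\<lambda>x. u x s"] by simp
    ultimately show "(?n \<longlongrightarrow> ?n t) (at t within {0..T})"
      by (auto elim!: Lim_transform_eventually intro: eventually_at_within_of_mem)
  qed
  then have "bounded ((\<lambda>s. L2_inner \<Omega> (\<lambda>x. u x s) (\<lambda>x. u x s)) ` {0..T})"
    by (intro compact_imp_bounded compact_continuous_image) auto
  then obtain C where "\<And>s. s \<in> {0..T} \<Longrightarrow> norm (L2_inner \<Omega> (\<lambda>x. u x s) (\<lambda>x. u x s)) \<le> C"
    unfolding bounded_iff by blast
  then show ?thesis
    by (intro that[of C]) (simp add: abs_le_iff)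
qed

section \<open>The time-Laplace transform\<close>

lemma sigma_finite_lebesgue: "sigma_finite_measure (lebesgue :: 'a::euclidean_space measure)"
proof -
  obtain A :: "'a set set" where "countable A" "A \<subseteq> sets lborel" "\<Union>A = space lborel"
    "\<forall>a\<in>A. emeasure lborel a \<noteq> \<infinity>"
    using sigma_finite_measure.sigma_finite_countable[OF sigma_finite_lborel] by blast
  then show ?thesis
    by (intro sigma_finite_measure.intro exI[of _ A]) auto
qed

interpretation lebesgue_pair: pair_sigma_finite "lebesgue :: (real^3) measure" "lebesgue :: real measure"
  unfolding pair_sigma_finite_def by (intro conjI sigma_finite_lebesgue)

lemma wave_sol_laplace_integrand_measurable:
  assumes w: "wave_sol \<Omega> T f u Gu ut" and g: "L2 \<Omega> g"
  shows "(\<lambda>(x, t). indicator \<Omega> x * g x * (indicator {0..T} t * (exp (- \<tau> * t) * u x t)))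
           \<in> borel_measurable (lebesgue \<Otimes>\<^sub>M lebesgue)"
proof -
  have "(\<lambda>p. indicator (\<Omega> \<times> {0..T}) p * u (fst p) (snd p)) \<in> borel_measurable (lebesgue \<Otimes>\<^sub>M lebesgue)"
    using w by (simp add: wave_sol_def)
  moreover have "(\<lambda>x. indicator \<Omega> x * g x) \<in> borel_measurable lebesgue"
    by (rule L2_measurable[OF g])
  moreover have "(\<lambda>t::real. exp (- \<tau> * t)) \<in> borel_measurable lebesgue"
    by (intro continuous_on_imp_lebesgue_measurable continuous_intros)
  ultimately have "(\<lambda>p. indicator \<Omega> (fst p) * g (fst p) * exp (- \<tau> * snd p)
                       * (indicator (\<Omega> \<times> {0..T}) p * u (fst p) (snd p)))
                   \<in> borel_measurable (lebesgue \<Otimes>\<^sub>M lebesgue)"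
    by measurable
  moreover have "(\<lambda>p. indicator \<Omega> (fst p) * g (fst p) * exp (- \<tau> * snd p)
                       * (indicator (\<Omega> \<times> {0..T}) p * u (fst p) (snd p)))
                 = (\<lambda>(x, t). indicator \<Omega> x * g x * (indicator {0..T} t * (exp (- \<tau> * t) * u x t)))"
    by (auto simp: fun_eq_iff indicator_def)
  ultimately show ?thesis by simp
qed

text \<open>Tonelli: for each \<open>t\<close> the \<open>x\<close>-integral of the integrand is at most
  \<open>e\<^sup>\<bar>\<tau>\<bar>\<^sup>T (\<parallel>g\<parallel>\<^sup>2 + \<parallel>u(t)\<parallel>\<^sup>2)\<close>, which is bounded on \<open>[0,T]\<close>.\<close>
lemma wave_sol_laplace_integrable:
  assumes w: "wave_sol \<Omega> T f u Gu ut" and g: "L2 \<Omega> g"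
  shows "integrable (lebesgue \<Otimes>\<^sub>M lebesgue)
           (\<lambda>(x, t). indicator \<Omega> x * g x * (indicator {0..T} t * (exp (- \<tau> * t) * u x t)))"
proof -
  define F where "F = (\<lambda>(x, t). indicator \<Omega> x * g x * (indicator {0..T} t * (exp (- \<tau> * t) * u x t)))"
  have meas: "F \<in> borel_measurable (lebesgue \<Otimes>\<^sub>M lebesgue)"
    unfolding F_def by (rule wave_sol_laplace_integrand_measurable[OF w g])
  obtain C where C: "\<And>s. s \<in> {0..T} \<Longrightarrow> L2_inner \<Omega> (\<lambda>x. u x s) (\<lambda>x. u x s) \<le> C"
    using wave_sol_L2_norm_bounded[OF w] by blast
  define E where "E = exp (\<bar>\<tau>\<bar> * T)"
  define K where "K = E * (L2_inner \<Omega> g g + max C 0)"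
  have slice: "(\<integral>\<^sup>+x. ennreal (norm (F (x, t))) \<partial>lebesgue) \<le> ennreal K * indicator {0..T} t" for t
  proof (cases "t \<in> {0..T}")
    case True
    have "- \<tau> * t \<le> \<bar>\<tau>\<bar> * t" using True by (intro mult_right_mono) auto
    also have "\<dots> \<le> \<bar>\<tau>\<bar> * T" using True by (intro mult_left_mono) auto
    finally have e: "exp (- \<tau> * t) \<le> E" by (simp add: E_def)
    have "norm (F (x, t)) \<le> E * (indicator \<Omega> x * (g x)\<^sup>2 + indicator \<Omega> x * (u x t)\<^sup>2)" for x
    proof -
      have "norm (F (x, t)) = indicator \<Omega> x * (exp (- \<tau> * t) * \<bar>g x * u x t\<bar>)"
        using True by (simp add: F_def abs_mult indicator_def)
      also have "\<dots> \<le> indicator \<Omega> x * (E * ((g x)\<^sup>2 + (u x t)\<^sup>2))"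
        by (intro mult_left_mono mult_mono e abs_mult_le_sum_squares) (auto simp: E_def)
      finally show ?thesis by (simp add: algebra_simps)
    qed
    then have "(\<integral>\<^sup>+x. ennreal (norm (F (x, t))) \<partial>lebesgue)
                 \<le> (\<integral>\<^sup>+x. ennreal (E * (indicator \<Omega> x * (g x)\<^sup>2 + indicator \<Omega> x * (u x t)\<^sup>2)) \<partial>lebesgue)"
      by (intro nn_integral_mono ennreal_leI)
    also have "\<dots> = ennreal (E * (L2_inner \<Omega> g g + L2_inner \<Omega> (\<lambda>x. u x t) (\<lambda>x. u x t)))"
      using L2_square_integrable[OF g] L2_square_integrable[OF wave_sol_L2[OF w True]]
      by (subst nn_integral_eq_integral)
         (auto simp: E_def L2_inner_self_eq set_integral_real_eq_integral_indicator)
    also have "\<dots> \<le> ennreal K"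
      using C[OF True] by (intro ennreal_leI) (auto simp: K_def E_def intro!: mult_left_mono)
    finally show ?thesis using True by simp
  qed (simp add: F_def)
  have "(\<integral>\<^sup>+p. ennreal (norm (F p)) \<partial>(lebesgue \<Otimes>\<^sub>M lebesgue))
          = (\<integral>\<^sup>+t. (\<integral>\<^sup>+x. ennreal (norm (F (x, t))) \<partial>lebesgue) \<partial>lebesgue)"
    by (rule lebesgue_pair.nn_integral_snd[symmetric]) (use meas in measurable)
  also have "\<dots> \<le> (\<integral>\<^sup>+t. ennreal K * indicator {0..T} t \<partial>lebesgue)"
    by (intro nn_integral_mono slice)
  also have "\<dots> = ennreal K * emeasure lebesgue {0..T}"
    by (rule nn_integral_cmult_indicator) simp
  also have "\<dots> < \<infinity>"
    using emeasure_lebesgue_compact_finite[of "{0..T}"] by (simp add: ennreal_mult_less_top)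
  finally show ?thesis
    using meas by (simp add: integrable_iff_bounded F_def)
qed

lemma laplace_T_pairing_eq_time_integral:
  assumes w: "wave_sol \<Omega> T f u Gu ut" and g: "L2 \<Omega> g"
  shows "set_integrable lebesgue \<Omega> (\<lambda>x. laplace_T T \<tau> u x * g x)"
    and "(LINT x:\<Omega>|lebesgue. laplace_T T \<tau> u x * g x)
           = (LINT t:{0..T}|lebesgue. exp (- \<tau> * t) * L2_inner \<Omega> g (\<lambda>x. u x t))"
proof -
  define F where "F x t = indicator \<Omega> x * g x * (indicator {0..T} t * (exp (- \<tau> * t) * u x t))" for x t
  have F: "integrable (lebesgue \<Otimes>\<^sub>M lebesgue) (\<lambda>(x, t). F x t)"
    unfolding F_def by (rule wave_sol_laplace_integrable[OF w g])
  have x_slice: "(\<integral>t. F x t \<partial>lebesgue) = indicator \<Omega> x * (laplace_T T \<tau> u x * g x)" for x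
    by (simp add: F_def laplace_T_def set_integral_real_eq_integral_indicator)
  have t_slice: "(\<integral>x. F x t \<partial>lebesgue) = indicator {0..T} t * (exp (- \<tau> * t) * L2_inner \<Omega> g (\<lambda>x. u x t))" for t
  proof -
    have "(\<integral>x. F x t \<partial>lebesgue)
            = (\<integral>x. (indicator {0..T} t * exp (- \<tau> * t)) * (indicator \<Omega> x * (g x * u x t)) \<partial>lebesgue)"
      by (simp add: F_def algebra_simps)
    then show ?thesis
      by (simp add: L2_inner_def set_integral_real_eq_integral_indicator)
  qed
  show "set_integrable lebesgue \<Omega> (\<lambda>x. laplace_T T \<tau> u x * g x)"
    using lebesgue_pair.integrable_fst'[OF F] unfolding set_integrable_def by (simp add: x_slice)
  have "(LINT x:\<Omega>|lebesgue. laplace_T T \<tau> u x * g x) = (\<integral>x. (\<integral>t. F x t \<partial>lebesgue) \<partial>lebesgue)"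
    by (simp add: x_slice set_integral_real_eq_integral_indicator)
  also have "\<dots> = (\<integral>t. (\<integral>x. F x t \<partial>lebesgue) \<partial>lebesgue)"
    by (rule lebesgue_pair.Fubini_integral[OF F, symmetric])
  also have "\<dots> = (LINT t:{0..T}|lebesgue. exp (- \<tau> * t) * L2_inner \<Omega> g (\<lambda>x. u x t))"
    by (simp add: t_slice set_integral_real_eq_integral_indicator)
  finally show "(LINT x:\<Omega>|lebesgue. laplace_T T \<tau> u x * g x)
                  = (LINT t:{0..T}|lebesgue. exp (- \<tau> * t) * L2_inner \<Omega> g (\<lambda>x. u x t))" .
qed

text \<open>The hypotheses say \<open>p'' = \<tau>\<^sup>2 p - q\<close>, hence \<open>(e\<^sup>-\<^sup>\<tau>\<^sup>t (p' + \<tau> p))' = - e\<^sup>-\<^sup>\<tau>\<^sup>t q\<close>.\<close>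
lemma has_integral_exp_weighted_source:
  fixes p p' q :: "real \<Rightarrow> real"
  assumes T: "0 \<le> T"
    and p: "\<And>t. t \<in> {0..T} \<Longrightarrow> (p has_real_derivative p' t) (at t within {0..T})"
    and q: "continuous_on {0..T} q"
    and p': "\<And>t. t \<in> {0..T} \<Longrightarrow> p' t = p' 0 - integral {0..t} (\<lambda>s. q s - \<tau>\<^sup>2 * p s)"
  shows "((\<lambda>t. exp (- \<tau> * t) * q t) has_integral
           (p' 0 + \<tau> * p 0 - exp (- \<tau> * T) * (p' T + \<tau> * p T))) {0..T}"
proof -
  define h where "h s = q s - \<tau>\<^sup>2 * p s" for s
  have "continuous_on {0..T} p"
    unfolding continuous_on_eq_continuous_within
    using p has_field_derivative_imp_has_derivative has_derivative_continuous by blast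
  then have h: "continuous_on {0..T} h" unfolding h_def using q by (intro continuous_intros)
  have dp': "(p' has_real_derivative - h t) (at t within {0..T})" if t: "t \<in> {0..T}" for t
  proof -
    have "((\<lambda>u. integral {0..u} h) has_vector_derivative h t) (at t within {0..T})"
      by (rule integral_has_vector_derivative[OF h t])
    then have "((\<lambda>u. integral {0..u} h) has_real_derivative h t) (at t within {0..T})"
      by (simp add: has_real_derivative_iff_has_vector_derivative)
    then have "((\<lambda>u. p' 0 - integral {0..u} h) has_real_derivative 0 - h t) (at t within {0..T})"
      by (intro DERIV_diff DERIV_const)
    then have "((\<lambda>u. p' 0 - integral {0..u} h) has_real_derivative - h t) (at t within {0..T})"
      by simp
    then show ?thesis
    proof (rule has_field_derivative_transform_within[where d=1])
      show "p' 0 - integral {0..x} h = p' x" if "x \<in> {0..T}" "dist x t < 1" for x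
        using p'[OF that(1)] unfolding h_def[abs_def] by simp
    qed (use t in auto)
  qed
  define \<Phi> where "\<Phi> t = exp (- \<tau> * t) * (p' t + \<tau> * p t)" for t
  have "(\<Phi> has_vector_derivative - (exp (- \<tau> * t) * q t)) (at t within {0..T})" if t: "t \<in> {0..T}" for t
  proof -
    have e: "((\<lambda>t. exp (- \<tau> * t)) has_real_derivative exp (- \<tau> * t) * (- \<tau>)) (at t within {0..T})"
      using DERIV_chain2[OF DERIV_exp DERIV_cmult[OF DERIV_ident, of "- \<tau>"]]
      by (simp add: has_field_derivative_at_within)
    have "(\<Phi> has_real_derivative
            exp (- \<tau> * t) * (- \<tau>) * (p' t + \<tau> * p t) + (- h t + \<tau> * p' t) * exp (- \<tau> * t))
            (at t within {0..T})"
      unfolding \<Phi>_def by (intro DERIV_mult e DERIV_add DERIV_cmult dp'[OF t] p[OF t])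
    moreover have "exp (- \<tau> * t) * (- \<tau>) * (p' t + \<tau> * p t) + (- h t + \<tau> * p' t) * exp (- \<tau> * t)
                     = - (exp (- \<tau> * t) * q t)"
      by (simp add: h_def algebra_simps power2_eq_square)
    ultimately show ?thesis by (simp add: has_real_derivative_iff_has_vector_derivative)
  qed
  from has_integral_neg[OF fundamental_theorem_of_calculus[OF T this]]
  show ?thesis by (simp add: \<Phi>_def)
qed

lemma wave_sol_gradient_pairing:
  assumes w: "wave_sol \<Omega> T f u Gu ut" and s: "s \<in> {0..T}" and \<phi>: "H10 \<Omega> \<phi> G\<phi>"
    and weak: "\<And>a Ga. H10 \<Omega> a Ga \<Longrightarrow> energy_form \<Omega> (\<tau>\<^sup>2) \<phi> G\<phi> a Ga = L2_inner \<Omega> g a"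
  shows "(LINT x:\<Omega>|lebesgue. Gu x s \<bullet> G\<phi> x)
           = L2_inner \<Omega> g (\<lambda>x. u x s) - \<tau>\<^sup>2 * L2_inner \<Omega> \<phi> (\<lambda>x. u x s)"
  using energy_form_gradient_part[OF H10_imp_L2_grad[OF wave_sol_H10[OF w s]] H10_imp_L2_grad[OF \<phi>]]
    weak[OF wave_sol_H10[OF w s]] energy_form_commute L2_inner_commute
  by metis

lemma wave_sol_velocity_pairing:
  assumes w: "wave_sol \<Omega> T f u Gu ut" and t: "t \<in> {0..T}" and \<phi>: "H10 \<Omega> \<phi> G\<phi>"
    and weak: "\<And>a Ga. H10 \<Omega> a Ga \<Longrightarrow> energy_form \<Omega> (\<tau>\<^sup>2) \<phi> G\<phi> a Ga = L2_inner \<Omega> g a"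
  shows "L2_inner \<Omega> \<phi> (\<lambda>x. ut x t) = L2_inner \<Omega> \<phi> (\<lambda>x. ut x 0)
           - integral {0..t} (\<lambda>s. L2_inner \<Omega> g (\<lambda>x. u x s) - \<tau>\<^sup>2 * L2_inner \<Omega> \<phi> (\<lambda>x. u x s))"
proof -
  have "L2_inner \<Omega> \<phi> (\<lambda>x. ut x t) - L2_inner \<Omega> \<phi> (\<lambda>x. ut x 0)
          = - integral {0..t} (\<lambda>s. LINT x:\<Omega>|lebesgue. Gu x s \<bullet> G\<phi> x)"
    using w \<phi> t unfolding wave_sol_def L2_inner_def by (simp add: mult.commute)
  also have "\<dots> = - integral {0..t} (\<lambda>s. L2_inner \<Omega> g (\<lambda>x. u x s) - \<tau>\<^sup>2 * L2_inner \<Omega> \<phi> (\<lambda>x. u x s))"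
    using t wave_sol_gradient_pairing[OF w _ \<phi> weak]
    by (intro arg_cong[where f=uminus] integral_cong) auto
  finally show ?thesis by simp
qed

lemma wave_sol_initial_pairings:
  assumes w: "wave_sol \<Omega> T f u Gu ut" and T: "0 \<le> T" and f: "L2 \<Omega> f" and \<phi>: "L2 \<Omega> \<phi>"
  shows "L2_inner \<Omega> \<phi> (\<lambda>x. u x 0) = 0" and "L2_inner \<Omega> \<phi> (\<lambda>x. ut x 0) = L2_inner \<Omega> f \<phi>"
proof -
  have t0: "0 \<in> {0..T}" using T by simp
  show "L2_inner \<Omega> \<phi> (\<lambda>x. u x 0) = 0"
    using w L2_inner_eq_0_if_norm_eq_0[OF \<phi> wave_sol_L2[OF w t0]] unfolding wave_sol_def by blast
  have "L2_inner \<Omega> \<phi> (\<lambda>x. ut x 0 - f x) = 0"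
    using w L2_inner_eq_0_if_norm_eq_0[OF \<phi> L2_diff[OF wave_sol_L2_velocity[OF w t0] f]]
    unfolding wave_sol_def by blast
  then show "L2_inner \<Omega> \<phi> (\<lambda>x. ut x 0) = L2_inner \<Omega> f \<phi>"
    using L2_inner_diff_right[OF \<phi> wave_sol_L2_velocity[OF w t0] f]
    by (simp add: L2_inner_commute[of \<Omega> f])
qed

lemma wave_sol_laplace_T_pairing:
  assumes w: "wave_sol \<Omega> T f u Gu ut" and T: "0 \<le> T" and f: "L2 \<Omega> f" and g: "L2 \<Omega> g"
    and \<phi>: "H10 \<Omega> \<phi> G\<phi>"
    and weak: "\<And>a Ga. H10 \<Omega> a Ga \<Longrightarrow> energy_form \<Omega> (\<tau>\<^sup>2) \<phi> G\<phi> a Ga = L2_inner \<Omega> g a"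
  shows "(LINT x:\<Omega>|lebesgue. laplace_T T \<tau> u x * g x)
           = L2_inner \<Omega> f \<phi> - exp (- \<tau> * T) * L2_inner \<Omega> (\<lambda>x. ut x T + \<tau> * u x T) \<phi>"
proof -
  define p p' q where "p s = L2_inner \<Omega> \<phi> (\<lambda>x. u x s)" and "p' s = L2_inner \<Omega> \<phi> (\<lambda>x. ut x s)"
    and "q s = L2_inner \<Omega> g (\<lambda>x. u x s)" for s
  have \<phi>L: "L2 \<Omega> \<phi>" using H10_imp_L2_grad[OF \<phi>] by (simp add: L2_grad_def)
  have tT: "T \<in> {0..T}" using T by simp
  have "((\<lambda>t. exp (- \<tau> * t) * q t) has_integral
          (p' 0 + \<tau> * p 0 - exp (- \<tau> * T) * (p' T + \<tau> * p T))) {0..T}"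
  proof (rule has_integral_exp_weighted_source[OF T])
    show "(p has_real_derivative p' t) (at t within {0..T})" if "t \<in> {0..T}" for t
      unfolding p_def[abs_def] p'_def by (rule wave_sol_L2_inner_has_derivative[OF w \<phi>L that])
    show "continuous_on {0..T} q"
      unfolding q_def[abs_def] by (rule wave_sol_L2_inner_continuous[OF w g])
    show "p' t = p' 0 - integral {0..t} (\<lambda>s. q s - \<tau>\<^sup>2 * p s)" if "t \<in> {0..T}" for t
      unfolding p_def p'_def q_def by (rule wave_sol_velocity_pairing[OF w that \<phi> weak])
  qed
  moreover have "p' T + \<tau> * p T = L2_inner \<Omega> (\<lambda>x. ut x T + \<tau> * u x T) \<phi>"
    using L2_inner_add_right[OF \<phi>L wave_sol_L2_velocity[OF w tT] L2_cmult[OF wave_sol_L2[OF w tT]]]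
    by (simp add: p_def p'_def L2_inner_cmult_right L2_inner_commute[of \<Omega> _ \<phi>])
  moreover have "(LINT x:\<Omega>|lebesgue. laplace_T T \<tau> u x * g x) = integral {0..T} (\<lambda>t. exp (- \<tau> * t) * q t)"
    unfolding laplace_T_pairing_eq_time_integral(2)[OF w g] q_def
    by (intro set_lebesgue_integral_eq_integral(2) absolutely_integrable_continuous_real continuous_intros
          wave_sol_L2_inner_continuous[OF w g])
  ultimately show ?thesis
    using wave_sol_initial_pairings[OF w T f \<phi>L] by (simp add: integral_unique p_def p'_def)
qed

section \<open>The stationary problems\<close>

lemma exterior_dirichlet_L2_grad:
  assumes "exterior_dirichlet \<Omega> \<tau> v Gv e Ge"
  shows "L2_grad \<Omega> e Ge" and "L2_grad \<Omega> v Gv"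
proof -
  show e: "L2_grad \<Omega> e Ge"
    using assms by (simp add: exterior_dirichlet_def H1_imp_L2_grad)
  have "L2_grad \<Omega> (\<lambda>x. e x + v x) (\<lambda>x. Ge x + Gv x)"
    using assms by (simp add: exterior_dirichlet_def H10_imp_L2_grad)
  from L2_grad_diff[OF this e] show "L2_grad \<Omega> v Gv" by simp
qed

lemma exterior_dirichlet_total_field:
  assumes hel: "helmholtz_R3 \<tau> h v Gv" and ext: "exterior_dirichlet \<Omega> \<tau> v Gv e Ge"
    and h: "L2 \<Omega> h" and \<Omega>: "\<Omega> \<in> sets lebesgue" and a: "H10 \<Omega> a Ga"
  shows "energy_form \<Omega> (\<tau>\<^sup>2) (\<lambda>x. e x + v x) (\<lambda>x. Ge x + Gv x) a Ga = L2_inner \<Omega> h a"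
proof -
  have "energy_form \<Omega> (\<tau>\<^sup>2) e Ge a Ga = 0"
    using ext a by (simp add: exterior_dirichlet_def energy_form_def)
  moreover have "energy_form \<Omega> (\<tau>\<^sup>2) v Gv a Ga = L2_inner \<Omega> h a"
    by (rule helmholtz_R3_on_H10[OF hel h \<Omega> a])
  moreover have "energy_form \<Omega> (\<tau>\<^sup>2) a Ga (\<lambda>x. e x + v x) (\<lambda>x. Ge x + Gv x)
                   = energy_form \<Omega> (\<tau>\<^sup>2) a Ga e Ge + energy_form \<Omega> (\<tau>\<^sup>2) a Ga v Gv"
    by (rule energy_form_add_right[OF H10_imp_L2_grad[OF a] exterior_dirichlet_L2_grad[OF ext]])
  ultimately show ?thesis
    by (simp add: energy_form_commute[of \<Omega> _ a Ga])
qed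

lemma helmholtz_R3_energy_split:
  fixes D :: "(real^3) set"
  assumes D: "open D" "negligible (frontier D)"
    and hf: "helmholtz_R3 \<tau> f vf Gvf" and hg: "helmholtz_R3 \<tau> g vg Gvg"
    and f0: "\<And>x. x \<notin> - closure D \<Longrightarrow> f x = 0"
  shows "energy_form D (\<tau>\<^sup>2) vf Gvf vg Gvg + energy_form (- closure D) (\<tau>\<^sup>2) vf Gvf vg Gvg
           = L2_inner (- closure D) f vg"
proof -
  have v: "L2_grad UNIV vf Gvf" "L2_grad UNIV vg Gvg"
    using hf hg by (simp_all add: helmholtz_R3_def H1_imp_L2_grad)
  have "(LINT x|lebesgue. Gvf x \<bullet> Gvg x + \<tau>\<^sup>2 * vf x * vg x)
          = energy_form D (\<tau>\<^sup>2) vf Gvf vg Gvg + energy_form (- closure D) (\<tau>\<^sup>2) vf Gvf vg Gvg"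
    unfolding energy_form_def
    by (rule integral_split_negligible_frontier[OF D]) (use energy_form_integrable[OF v] in simp)
  moreover have "(LINT x|lebesgue. Gvf x \<bullet> Gvg x + \<tau>\<^sup>2 * vf x * vg x) = (LINT x|lebesgue. f x * vg x)"
    using hf hg by (simp add: helmholtz_R3_def)
  moreover have "(LINT x|lebesgue. f x * vg x) = L2_inner (- closure D) f vg"
    unfolding L2_inner_def by (rule integral_eq_set_integral_if_vanishes) (simp add: f0)
  ultimately show ?thesis by simp
qed

text \<open>Test the equations of \<open>v\<^sub>f\<close> and \<open>\<epsilon>\<^sub>g\<close> with \<open>\<epsilon>\<^sub>g + v\<^sub>g\<close> and \<open>\<epsilon>\<^sub>f + v\<^sub>f\<close>,
  which vanish on \<open>\<partial>D\<close>, and the equation of \<open>v\<^sub>f\<close> on all of \<open>\<real>\<^sup>3\<close> with \<open>v\<^sub>g\<close>.\<close>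
lemma exterior_energy_identity:
  fixes D :: "(real^3) set"
  assumes D: "open D" "negligible (frontier D)"
    and hf: "helmholtz_R3 \<tau> f vf Gvf" and hg: "helmholtz_R3 \<tau> g vg Gvg"
    and ef: "exterior_dirichlet (- closure D) \<tau> vf Gvf ef Gef"
    and eg: "exterior_dirichlet (- closure D) \<tau> vg Gvg eg Geg"
    and f: "L2 (- closure D) f" and f0: "\<And>x. x \<notin> - closure D \<Longrightarrow> f x = 0"
  shows "energy_form D (\<tau>\<^sup>2) vf Gvf vg Gvg + energy_form (- closure D) (\<tau>\<^sup>2) ef Gef eg Geg
           = - L2_inner (- closure D) f eg"
proof -
  define \<Omega> where "\<Omega> = - closure D"
  have \<Omega>: "\<Omega> \<in> sets lebesgue" by (simp add: \<Omega>_def)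
  note Lf = exterior_dirichlet_L2_grad[OF ef[folded \<Omega>_def]]
  note Lg = exterior_dirichlet_L2_grad[OF eg[folded \<Omega>_def]]
  have "energy_form \<Omega> (\<tau>\<^sup>2) vf Gvf eg Geg + energy_form \<Omega> (\<tau>\<^sup>2) vf Gvf vg Gvg
          = L2_inner \<Omega> f eg + L2_inner \<Omega> f vg"
  proof -
    have "H10 \<Omega> (\<lambda>x. eg x + vg x) (\<lambda>x. Geg x + Gvg x)"
      using eg by (simp add: exterior_dirichlet_def \<Omega>_def)
    from helmholtz_R3_on_H10[OF hf f[folded \<Omega>_def] \<Omega> this] show ?thesis
      using energy_form_add_right[OF Lf(2) Lg] L2_inner_add_right[of \<Omega> f eg vg] f Lg
      by (simp add: \<Omega>_def L2_grad_def)
  qed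
  moreover have "energy_form \<Omega> (\<tau>\<^sup>2) eg Geg ef Gef + energy_form \<Omega> (\<tau>\<^sup>2) eg Geg vf Gvf = 0"
  proof -
    have "H10 \<Omega> (\<lambda>x. ef x + vf x) (\<lambda>x. Gef x + Gvf x)"
      using ef by (simp add: exterior_dirichlet_def \<Omega>_def)
    with eg have "energy_form \<Omega> (\<tau>\<^sup>2) eg Geg (\<lambda>x. ef x + vf x) (\<lambda>x. Gef x + Gvf x) = 0"
      by (simp add: exterior_dirichlet_def energy_form_def \<Omega>_def)
    then show ?thesis using energy_form_add_right[OF Lg(1) Lf] by simp
  qed
  moreover have "energy_form D (\<tau>\<^sup>2) vf Gvf vg Gvg + energy_form \<Omega> (\<tau>\<^sup>2) vf Gvf vg Gvg = L2_inner \<Omega> f vg"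
    unfolding \<Omega>_def by (rule helmholtz_R3_energy_split[OF D hf hg f0])
  ultimately show ?thesis
    using energy_form_commute[of \<Omega> "\<tau>\<^sup>2" eg Geg] by (simp add: \<Omega>_def)
qed

lemma dirichlet_source_pairing:
  assumes Z: "dirichlet_source \<Omega> \<tau> F Z GZ" and ext: "exterior_dirichlet \<Omega> \<tau> v Gv e Ge"
  shows "L2_inner \<Omega> F (\<lambda>x. e x + v x) = - energy_form \<Omega> (\<tau>\<^sup>2) Z GZ v Gv"
proof -
  have ZH: "H10 \<Omega> Z GZ" using Z by (simp add: dirichlet_source_def)
  have "energy_form \<Omega> (\<tau>\<^sup>2) Z GZ (\<lambda>x. e x + v x) (\<lambda>x. Ge x + Gv x) = - L2_inner \<Omega> F (\<lambda>x. e x + v x)"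
    using Z ext by (simp add: dirichlet_source_def exterior_dirichlet_def energy_form_def L2_inner_def)
  moreover have "energy_form \<Omega> (\<tau>\<^sup>2) e Ge Z GZ = 0"
    using ext ZH by (simp add: exterior_dirichlet_def energy_form_def)
  ultimately show ?thesis
    using energy_form_add_right[OF H10_imp_L2_grad[OF ZH] exterior_dirichlet_L2_grad[OF ext]]
      energy_form_commute[of \<Omega> "\<tau>\<^sup>2" e Ge Z GZ] by simp
qed

theorem proposition2p1:
  fixes D :: "(real^3) set" and T \<tau> r r' :: real and c c' :: "real^3"
    and vf vg ef eg Z :: "real^3 \<Rightarrow> real" and Gvf Gvg Gef Geg GZ :: "real^3 \<Rightarrow> real^3"
    and u ut :: "real^3 \<Rightarrow> real \<Rightarrow> real" and Gu :: "real^3 \<Rightarrow> real \<Rightarrow> real^3"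
  defines "\<Omega> \<equiv> - closure D"
    and "f \<equiv> indicator (ball c r) :: real^3 \<Rightarrow> real"
    and "g \<equiv> indicator (ball c' r') :: real^3 \<Rightarrow> real"
  assumes "D \<noteq> {}" and "open D" and "bounded D" and "C2_boundary D"
    and "connected (- closure D)"
    and "0 < T"
    and "0 < r" and "0 < r'"
    and "closure (ball c r) \<inter> closure D = {}" and "closure (ball c' r') \<inter> closure D = {}"
    and "0 < \<tau>"
    and "wave_sol \<Omega> T f u Gu ut"
    and "helmholtz_R3 \<tau> f vf Gvf" and "helmholtz_R3 \<tau> g vg Gvg"
    and "exterior_dirichlet \<Omega> \<tau> vf Gvf ef Gef" and "exterior_dirichlet \<Omega> \<tau> vg Gvg eg Geg"
    and "dirichlet_source \<Omega> \<tau> (\<lambda>x. ut x T + \<tau> * u x T) Z GZ"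
  shows "(LINT x:\<Omega>|lebesgue. f x * vg x - laplace_T T \<tau> u x * g x)
       = (LINT x:D|lebesgue. Gvf x \<bullet> Gvg x + \<tau>\<^sup>2 * vf x * vg x)
         + (LINT x:\<Omega>|lebesgue. Gef x \<bullet> Geg x + \<tau>\<^sup>2 * ef x * eg x)
         - exp (- \<tau> * T) * (LINT x:\<Omega>|lebesgue. GZ x \<bullet> Gvg x + \<tau>\<^sup>2 * Z x * vg x)"
proof -
  note D = assms(5-7) and w = assms(15) and hf = assms(16) and hg = assms(17)
    and ef = assms(18) and eg = assms(19) and Z = assms(20)
  have \<Omega>: "\<Omega> \<in> sets lebesgue" by (simp add: \<Omega>_def)
  have f0: "f x = 0" if "x \<notin> \<Omega>" for x
    using that assms(12) closure_subset[of "ball c r"] by (auto simp: \<Omega>_def f_def indicator_def)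
  have fL: "L2 \<Omega> f" and gL: "L2 \<Omega> g"
    unfolding f_def g_def by (auto intro!: L2_indicator_bounded \<Omega>)
  have egL: "L2 \<Omega> eg" and vgL: "L2 \<Omega> vg"
    using exterior_dirichlet_L2_grad[OF eg] by (simp_all add: L2_grad_def)
  have "energy_form D (\<tau>\<^sup>2) vf Gvf vg Gvg + energy_form \<Omega> (\<tau>\<^sup>2) ef Gef eg Geg = - L2_inner \<Omega> f eg"
    using exterior_energy_identity[OF D(1) C2_boundary_negligible_frontier[OF D(2,1,3)] hf hg
        ef[unfolded \<Omega>_def] eg[unfolded \<Omega>_def]] fL f0 by (simp add: \<Omega>_def)
  moreover have "(LINT x:\<Omega>|lebesgue. laplace_T T \<tau> u x * g x)
      = L2_inner \<Omega> f (\<lambda>x. eg x + vg x) + exp (- \<tau> * T) * energy_form \<Omega> (\<tau>\<^sup>2) Z GZ vg Gvg"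
    using wave_sol_laplace_T_pairing[OF w _ fL gL _ exterior_dirichlet_total_field[OF hg eg gL \<Omega>]]
      eg assms(9) dirichlet_source_pairing[OF Z eg] by (simp add: exterior_dirichlet_def)
  ultimately show ?thesis
    using set_integral_diff_eq_L2_inner[OF fL vgL laplace_T_pairing_eq_time_integral(1)[OF w gL]]
      L2_inner_add_right[OF fL egL vgL] by (simp add: energy_form_def)
qed

end
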